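(* Let $x\in V^p([0,T],\mathcal L(\mathbb V,\mathbb W))$ and $y\in V^q([0,T],\mathbb V)$ with $\frac1p+\frac1q>1$. If $x$ is càdlàg, then for every $t\in[0,T]$ $$\int_0^tx_r\,d\overleftarrow{y_r}-\int_0^tx_r\,dy_r=\sum_{0<r\le t}\Delta^-x_r\,\Delta^-y_r.$$ If $y$ is càglàd, then for every $t\in[0,T]$ $$\int_0^tx_r\,d\overleftarrow{y_r}-\int_0^tx_r\,dy_r=\sum_{0\le r<t}\Delta^+x_r\,\Delta^+y_r.$$ In particular, if $x$ is càdlàg and $y$ is càglàd, the backward and forward Young integrals coincide.
   Context: $\mathbb V,\mathbb W$ finite-dimensional Banach spaces; $V^p([0,T],E)$ the paths of finite $p$-variation; $\Delta^-x_t:=x_t-x_{t-}$, $\Delta^+x_t:=x_{t+}-x_t$. The backward Young integral $\int_0^tx_r\,d\overleftarrow{y_r}$ is the (RRS) limit of $\sum_ix_{t_{i+1}}(y_{t_{i+1}}-y_{t_i})$ and the forward Young integral $\int_0^tx_rdy_r$ the (RRS) limit of $\sum_ix_{t_i}(y_{t_{i+1}}-y_{t_i})$, over partitions of $[0,t]$; RRS limit means: for every $\varepsilon$ there is a partition such that all refinements give sums within $\varepsilon$ of the limit. *)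

theory Defs
  imports "HOL-Analysis.Analysis"
begin

definition partition_of :: "real \<Rightarrow> real \<Rightarrow> real set \<Rightarrow> bool" where
  "partition_of a b P \<longleftrightarrow> finite P \<and> P \<subseteq> {a..b} \<and> a \<in> P \<and> b \<in> P"

definition pvar_sum :: "real \<Rightarrow> (real \<Rightarrow> 'a::real_normed_vector) \<Rightarrow> real set \<Rightarrow> real" where
  "pvar_sum p f P = (let ts = sorted_list_of_set P in
     (\<Sum>i<length ts - 1. norm (f (ts ! Suc i) - f (ts ! i)) powr p))"

definition finite_pvar :: "real \<Rightarrow> real \<Rightarrow> real \<Rightarrow> (real \<Rightarrow> 'a::real_normed_vector) \<Rightarrow> bool" where
  "finite_pvar p a b f \<longleftrightarrow> (\<exists>M. \<forall>P. partition_of a b P \<longrightarrow> pvar_sum p f P \<le> M)"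

definition fwd_sum :: "(real \<Rightarrow> 'v::real_normed_vector \<Rightarrow>\<^sub>L 'w::real_normed_vector) \<Rightarrow> (real \<Rightarrow> 'v) \<Rightarrow> real set \<Rightarrow> 'w" where
  "fwd_sum x y P = (let ts = sorted_list_of_set P in
     (\<Sum>i<length ts - 1. blinfun_apply (x (ts ! i)) (y (ts ! Suc i) - y (ts ! i))))"

definition bwd_sum :: "(real \<Rightarrow> 'v::real_normed_vector \<Rightarrow>\<^sub>L 'w::real_normed_vector) \<Rightarrow> (real \<Rightarrow> 'v) \<Rightarrow> real set \<Rightarrow> 'w" where
  "bwd_sum x y P = (let ts = sorted_list_of_set P in
     (\<Sum>i<length ts - 1. blinfun_apply (x (ts ! Suc i)) (y (ts ! Suc i) - y (ts ! i))))"

definition RRS_has_limit :: "(real set \<Rightarrow> 'a::real_normed_vector) \<Rightarrow> real \<Rightarrow> 'a \<Rightarrow> bool" where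
  "RRS_has_limit S t I \<longleftrightarrow>
     (\<forall>\<epsilon>>0. \<exists>P0. partition_of 0 t P0 \<and>
        (\<forall>P. partition_of 0 t P \<and> P0 \<subseteq> P \<longrightarrow> norm (S P - I) < \<epsilon>))"

definition has_fwd_young :: "(real \<Rightarrow> 'v::real_normed_vector \<Rightarrow>\<^sub>L 'w::real_normed_vector) \<Rightarrow> (real \<Rightarrow> 'v) \<Rightarrow> real \<Rightarrow> 'w \<Rightarrow> bool" where
  "has_fwd_young x y t I \<longleftrightarrow> RRS_has_limit (fwd_sum x y) t I"

definition has_bwd_young :: "(real \<Rightarrow> 'v::real_normed_vector \<Rightarrow>\<^sub>L 'w::real_normed_vector) \<Rightarrow> (real \<Rightarrow> 'v) \<Rightarrow> real \<Rightarrow> 'w \<Rightarrow> bool" where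
  "has_bwd_young x y t I \<longleftrightarrow> RRS_has_limit (bwd_sum x y) t I"

definition left_lim :: "(real \<Rightarrow> 'a::t2_space) \<Rightarrow> real \<Rightarrow> 'a" where
  "left_lim f t = Lim (at_left t) f"

definition right_lim :: "(real \<Rightarrow> 'a::t2_space) \<Rightarrow> real \<Rightarrow> 'a" where
  "right_lim f t = Lim (at_right t) f"

definition jump_left :: "(real \<Rightarrow> 'a::real_normed_vector) \<Rightarrow> real \<Rightarrow> 'a" where
  "jump_left f t = f t - left_lim f t"

definition jump_right :: "(real \<Rightarrow> 'a::real_normed_vector) \<Rightarrow> real \<Rightarrow> 'a" where
  "jump_right f t = right_lim f t - f t"

definition cadlag_on :: "real \<Rightarrow> (real \<Rightarrow> 'a::topological_space) \<Rightarrow> bool" where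
  "cadlag_on T f \<longleftrightarrow> (\<forall>t\<in>{0..<T}. continuous (at_right t) f) \<and>
                      (\<forall>t\<in>{0<..T}. \<exists>l. (f \<longlongrightarrow> l) (at_left t))"

definition caglad_on :: "real \<Rightarrow> (real \<Rightarrow> 'a::topological_space) \<Rightarrow> bool" where
  "caglad_on T f \<longleftrightarrow> (\<forall>t\<in>{0<..T}. continuous (at_left t) f) \<and>
                      (\<forall>t\<in>{0..<T}. \<exists>l. (f \<longlongrightarrow> l) (at_right t))"

end

theory Submission
  imports Defs
begin

(*
  The backward and forward Riemann sums of a partition differ by its covariation sum, the sum over
  the cells [s, s'] of (x s' - x s)(y s' - y s). Both paths are controlled by the superadditive
  function omega(a, b) = sup over partitions of [a, b] of the p-variation of x plus the q-variation
  of y: |x b - x a| <= omega(a, b) powr (1/p) and |y b - y a| <= omega(a, b) powr (1/q).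

  A cell [s, s'] is e-fine if omega(s+, s') <= e or omega(s, s'-) <= e. Every [0, t] has e-fine
  partitions (by compactness), and their refinements stay e-fine. On e-fine cells Young's
  point-removal argument bounds the error of a germ with Young-type defect by a constant times
  e powr kappa * omega(s, s') powr theta, where theta > 1 and kappa > 0; for the germ
  x a (y b - y a) this is the sewing lemma, which gives the forward integral. On an e-fine cell the
  covariation increment differs from Delta+ x s Delta+ y s + Delta- x s' Delta- y s' by the same
  kind of bound, so along refinements the covariation sums converge to the sum of the products of
  left jumps plus the sum of the products of right jumps. The right jumps of a cadlag x and the left
  jumps of a caglad y vanish.
*)

section \<open>Partitions and sums over their cells\<close>

definition next_point :: "real set \<Rightarrow> real \<Rightarrow> real" where
  "next_point P s = Min {u\<in>P. s < u}"

definition partition_sum :: "(real \<Rightarrow> real \<Rightarrow> 'a::comm_monoid_add) \<Rightarrow> real set \<Rightarrow> 'a" where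
  "partition_sum g P = (\<Sum>s\<in>{s\<in>P. s < Max P}. g s (next_point P s))"

lemma
  assumes "finite P" "s \<in> P" "s < Max P"
  shows next_point_in: "next_point P s \<in> P"
    and next_point_gt: "s < next_point P s"
    and next_point_le: "\<And>u. u \<in> P \<Longrightarrow> s < u \<Longrightarrow> next_point P s \<le> u"
proof -
  have "Max P \<in> P" using assms by (intro Max_in) auto
  then have ne: "{u\<in>P. s < u} \<noteq> {}" using assms by blast
  have fin: "finite {u\<in>P. s < u}" using assms by auto
  show "next_point P s \<in> P" "s < next_point P s" using Min_in[OF fin ne] unfolding next_point_def by auto
  show "\<And>u. u \<in> P \<Longrightarrow> s < u \<Longrightarrow> next_point P s \<le> u" unfolding next_point_def using fin by auto
qed

lemma next_point_eqI:
  assumes "finite P" "r \<in> P" "s < r" "\<And>u. u \<in> P \<Longrightarrow> s < u \<Longrightarrow> r \<le> u"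
  shows "next_point P s = r"
  unfolding next_point_def using assms by (intro Min_eqI) auto

lemma next_point_subset:
  assumes "finite P" "Q \<subseteq> P" "s \<in> Q" "s < Max P" "next_point P s \<in> Q"
  shows "next_point Q s = next_point P s"
  using assms next_point_gt[OF assms(1) _ assms(4)] next_point_le[OF assms(1) _ assms(4)]
  by (intro next_point_eqI) (auto intro: finite_subset)

lemma next_point_pair: "a < b \<Longrightarrow> next_point {a, b} a = b"
  by (intro next_point_eqI) auto

lemma next_point_strict_mono:
  assumes "finite P" "s1 \<in> P" "s2 \<in> P" "s1 < s2" "s2 < Max P"
  shows "next_point P s1 < next_point P s2"
proof -
  have "next_point P s1 \<le> s2" using assms by (intro next_point_le) auto
  then show ?thesis using next_point_gt[OF assms(1,3,5)] by auto
qed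

lemma next_point_Max_below:
  assumes P: "finite P" "r \<in> P" "Min P < r"
  defines "s \<equiv> Max {u\<in>P. u < r}"
  shows "s \<in> P" "s < Max P" "next_point P s = r"
proof -
  have "Min P \<in> {u\<in>P. u < r}" using P Min_in by fastforce
  then have S: "finite {u\<in>P. u < r}" "{u\<in>P. u < r} \<noteq> {}" using P(1) by auto
  show s: "s \<in> P" "s < Max P" using Max_in[OF S] P unfolding s_def by (auto intro: order.strict_trans2)
  show "next_point P s = r"
  proof (rule next_point_eqI[OF P(1,2)])
    show "s < r" using Max_in[OF S] unfolding s_def by auto
    fix u assume u: "u \<in> P" "s < u"
    show "r \<le> u"
    proof (rule ccontr)
      assume "\<not> r \<le> u"
      then have "u \<le> s" using u S(1) unfolding s_def by (intro Max_ge) auto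
      then show False using u by simp
    qed
  qed
qed

lemma next_point_bij:
  assumes "finite P"
  shows "bij_betw (next_point P) {s\<in>P. s < Max P} (P - {Min P})"
proof (rule bij_betw_imageI)
  show "inj_on (next_point P) {s \<in> P. s < Max P}"
  proof (rule inj_onI)
    fix a b assume ab: "a \<in> {s \<in> P. s < Max P}" "b \<in> {s \<in> P. s < Max P}"
      and eq: "next_point P a = next_point P b"
    show "a = b"
    proof (rule ccontr)
      assume "a \<noteq> b"
      then consider "a < b" | "b < a" by linarith
      then show False
        using next_point_strict_mono[OF assms, of a b] next_point_strict_mono[OF assms, of b a] ab eq by auto
    qed
  qed
  show "next_point P ` {s \<in> P. s < Max P} = P - {Min P}"
  proof
    show "next_point P ` {s \<in> P. s < Max P} \<subseteq> P - {Min P}"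
    proof
      fix r assume "r \<in> next_point P ` {s \<in> P. s < Max P}"
      then obtain s where s: "s \<in> P" "s < Max P" "r = next_point P s" by auto
      then have "r \<in> P" "Min P \<le> s" "s < r" using assms next_point_in next_point_gt by auto
      then show "r \<in> P - {Min P}" by auto
    qed
    show "P - {Min P} \<subseteq> next_point P ` {s \<in> P. s < Max P}"
    proof
      fix r assume r: "r \<in> P - {Min P}"
      then have "Min P \<le> r" using assms by auto
      then have "Min P < r" using r by auto
      note s = next_point_Max_below[OF assms _ this]
      show "r \<in> next_point P ` {s \<in> P. s < Max P}"
        using s r by (intro image_eqI[of r _ "Max {u\<in>P. u < r}"]) auto
    qed
  qed
qed

lemma partition_sum_singleton [simp]: "partition_sum g {a} = 0"
proof -
  have "{s\<in>{a}. s < Max {a}} = {}" by auto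
  then show ?thesis unfolding partition_sum_def by (simp only: sum.empty)
qed

lemma partition_sum_pair: "a < b \<Longrightarrow> partition_sum g {a, b} = g a b"
proof -
  assume "a < b"
  then have "{s \<in> {a, b}. s < Max {a, b}} = {a}" by auto
  then show ?thesis unfolding partition_sum_def using next_point_pair[OF \<open>a < b\<close>] by simp
qed

lemma partition_sum_split:
  assumes "finite P" "c \<in> P"
  shows "partition_sum g P = partition_sum g (P \<inter> {..c}) + partition_sum g (P \<inter> {c..})"
proof -
  have cM: "c \<le> Max P" using assms by auto
  have M1: "Max (P \<inter> {..c}) = c" using assms by (intro Max_eqI) auto
  have M2: "Max (P \<inter> {c..}) = Max P" using assms cM by (intro Max_eqI) (auto intro: Max_in)
  have I: "{s\<in>P. s < Max P} = {s\<in>P \<inter> {..c}. s < c} \<union> {s\<in>P \<inter> {c..}. s < Max P}"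
    using cM by auto
  have "partition_sum g P = (\<Sum>s\<in>{s\<in>P \<inter> {..c}. s < c}. g s (next_point P s))
      + (\<Sum>s\<in>{s\<in>P \<inter> {c..}. s < Max P}. g s (next_point P s))"
    unfolding partition_sum_def I using assms by (subst sum.union_disjoint) auto
  also have "(\<Sum>s\<in>{s\<in>P \<inter> {..c}. s < c}. g s (next_point P s)) = partition_sum g (P \<inter> {..c})"
    unfolding partition_sum_def M1
  proof (rule sum.cong[OF refl])
    fix s assume s: "s \<in> {s\<in>P \<inter> {..c}. s < c}"
    then have sM: "s < Max P" using cM by auto
    have "next_point P s \<le> c" using next_point_le[OF assms(1) _ sM, of c] s assms by auto
    then have "next_point P s \<in> P \<inter> {..c}" using next_point_in[OF assms(1) _ sM] s by auto
    then show "g s (next_point P s) = g s (next_point (P \<inter> {..c}) s)"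
      using next_point_subset[OF assms(1), of "P \<inter> {..c}" s] s sM by auto
  qed
  also have "(\<Sum>s\<in>{s\<in>P \<inter> {c..}. s < Max P}. g s (next_point P s)) = partition_sum g (P \<inter> {c..})"
    unfolding partition_sum_def M2
  proof (rule sum.cong[OF refl])
    fix s assume s: "s \<in> {s\<in>P \<inter> {c..}. s < Max P}"
    then have "next_point P s \<in> P \<inter> {c..}"
      using next_point_in[OF assms(1), of s] next_point_gt[OF assms(1), of s] by auto
    then show "g s (next_point P s) = g s (next_point (P \<inter> {c..}) s)"
      using next_point_subset[OF assms(1), of "P \<inter> {c..}" s] s by auto
  qed
  finally show ?thesis .
qed

lemma partition_sum_Un:
  assumes "finite P1" "finite P2" "P1 \<subseteq> {a..c}" "P2 \<subseteq> {c..b}" "c \<in> P1" "c \<in> P2"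
  shows "partition_sum g (P1 \<union> P2) = partition_sum g P1 + partition_sum g P2"
proof -
  have "(P1 \<union> P2) \<inter> {..c} = P1" "(P1 \<union> P2) \<inter> {c..} = P2" using assms by auto
  then show ?thesis using partition_sum_split[of "P1 \<union> P2" c g] assms by simp
qed

lemma sorted_list_of_set_nth_less_iff:
  assumes "finite P" "i < length (sorted_list_of_set P)" "j < length (sorted_list_of_set P)"
  shows "sorted_list_of_set P ! i < sorted_list_of_set P ! j \<longleftrightarrow> i < j"
  using sorted_wrt_nth_less[OF strict_sorted_list_of_set] assms
  by (cases i j rule: linorder_cases) (auto dest: sorted_wrt_nth_less[OF strict_sorted_list_of_set])

lemma sorted_list_of_set_nth_in:
  "finite P \<Longrightarrow> i < length (sorted_list_of_set P) \<Longrightarrow> sorted_list_of_set P ! i \<in> P"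
  using nth_mem set_sorted_list_of_set by blast

lemma next_point_sorted_list_of_set:
  assumes P: "finite P" and i: "i < length (sorted_list_of_set P) - 1"
  shows "next_point P (sorted_list_of_set P ! i) = sorted_list_of_set P ! Suc i"
proof (rule next_point_eqI[OF P])
  let ?ts = "sorted_list_of_set P"
  show "?ts ! Suc i \<in> P" "?ts ! i < ?ts ! Suc i"
    using i sorted_list_of_set_nth_in[OF P] sorted_list_of_set_nth_less_iff[OF P, of i "Suc i"] by auto
  fix u assume "u \<in> P" "?ts ! i < u"
  then obtain j where j: "j < length ?ts" "u = ?ts ! j" using P by (metis in_set_conv_nth set_sorted_list_of_set)
  moreover have "i < length ?ts" using i by simp
  ultimately have "Suc i \<le> j" using sorted_list_of_set_nth_less_iff[OF P, of i j] \<open>?ts ! i < u\<close> by auto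
  then show "?ts ! Suc i \<le> u"
    using j sorted_list_of_set_nth_less_iff[OF P, of "Suc i" j] by (cases "Suc i = j") auto
qed

lemma sorted_list_of_set_bij_below_Max:
  assumes P: "finite P"
  shows "bij_betw ((!) (sorted_list_of_set P)) {..<length (sorted_list_of_set P) - 1} {s\<in>P. s < Max P}"
proof (rule bij_betw_imageI)
  let ?ts = "sorted_list_of_set P"
  let ?last = "length ?ts - 1"
  note lt_iff = sorted_list_of_set_nth_less_iff[OF P]
  show "inj_on ((!) ?ts) {..<?last}"
    using distinct_sorted_list_of_set by (auto simp: inj_on_def nth_eq_iff_index_eq)
  show "(!) ?ts ` {..<?last} = {s\<in>P. s < Max P}"
  proof (cases "P = {}")
    case False
    have Max: "Max P = ?ts ! ?last"
    proof (rule Max_eqI[OF P])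
      show "?ts ! ?last \<in> P" using P False by (intro sorted_list_of_set_nth_in) (auto simp: card_gt_0_iff)
      fix u assume "u \<in> P"
      then obtain j where "j < length ?ts" "u = ?ts ! j" using P by (metis in_set_conv_nth set_sorted_list_of_set)
      then show "u \<le> ?ts ! ?last" using lt_iff[of j ?last] by (cases "j = ?last") auto
    qed
    show ?thesis
    proof
      show "(!) ?ts ` {..<?last} \<subseteq> {s\<in>P. s < Max P}"
        using P Max lt_iff sorted_list_of_set_nth_in[OF P] by auto
      show "{s\<in>P. s < Max P} \<subseteq> (!) ?ts ` {..<?last}"
      proof
        fix s assume s: "s \<in> {s\<in>P. s < Max P}"
        then obtain j where j: "j < length ?ts" "s = ?ts ! j" using P by (metis (no_types, lifting) in_set_conv_nth mem_Collect_eq set_sorted_list_of_set)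
        then have "j < ?last" using lt_iff[of j ?last] s Max by auto
        then show "s \<in> (!) ?ts ` {..<?last}" using j by auto
      qed
    qed
  qed simp
qed

lemma partition_sum_sorted_list:
  assumes "finite P"
  shows "(let ts = sorted_list_of_set P in \<Sum>i<length ts - 1. g (ts!i) (ts!Suc i)) = partition_sum g P"
proof -
  let ?ts = "sorted_list_of_set P"
  have "(\<Sum>i<length ?ts - 1. g (?ts!i) (?ts!Suc i)) = (\<Sum>i<length ?ts - 1. g (?ts!i) (next_point P (?ts!i)))"
    using next_point_sorted_list_of_set[OF assms] by simp
  also have "\<dots> = partition_sum g P" unfolding partition_sum_def
    by (rule sum.reindex_bij_betw[OF sorted_list_of_set_bij_below_Max[OF assms]])
  finally show ?thesis by simp
qed

lemma pvar_sum_eq_partition_sum: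
  "finite P \<Longrightarrow> pvar_sum p f P = partition_sum (\<lambda>a b. norm (f b - f a) powr p) P"
  unfolding pvar_sum_def by (rule partition_sum_sorted_list)

lemma fwd_sum_eq_partition_sum:
  "finite P \<Longrightarrow> fwd_sum x y P = partition_sum (\<lambda>a b. blinfun_apply (x a) (y b - y a)) P"
  unfolding fwd_sum_def by (rule partition_sum_sorted_list)

lemma bwd_sum_eq_partition_sum:
  "finite P \<Longrightarrow> bwd_sum x y P = partition_sum (\<lambda>a b. blinfun_apply (x b) (y b - y a)) P"
  unfolding bwd_sum_def by (rule partition_sum_sorted_list)

lemma partition_sum_add:
  fixes f g :: "real \<Rightarrow> real \<Rightarrow> 'a::ab_group_add"
  shows "partition_sum (\<lambda>a b. f a b + g a b) P = partition_sum f P + partition_sum g P"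
  unfolding partition_sum_def by (simp add: sum.distrib)

lemma partition_sum_diff:
  fixes f g :: "real \<Rightarrow> real \<Rightarrow> 'a::ab_group_add"
  shows "partition_sum (\<lambda>a b. f a b - g a b) P = partition_sum f P - partition_sum g P"
  unfolding partition_sum_def by (simp add: sum_subtractf)

lemma partition_sum_mult_left:
  fixes g :: "real \<Rightarrow> real \<Rightarrow> real"
  shows "partition_sum (\<lambda>a b. c * g a b) P = c * partition_sum g P"
  unfolding partition_sum_def by (simp add: sum_distrib_left)

lemma norm_partition_sum_le: "norm (partition_sum g P) \<le> partition_sum (\<lambda>a b. norm (g a b)) P"
  unfolding partition_sum_def by (rule norm_sum)

lemma partition_sum_mono:
  fixes f g :: "real \<Rightarrow> real \<Rightarrow> real"
  assumes "\<And>s. s \<in> P \<Longrightarrow> s < Max P \<Longrightarrow> f s (next_point P s) \<le> g s (next_point P s)"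
  shows "partition_sum f P \<le> partition_sum g P"
  unfolding partition_sum_def using assms by (intro sum_mono) auto

lemma partition_sum_nonneg:
  fixes f :: "real \<Rightarrow> real \<Rightarrow> real"
  assumes "\<And>s. s \<in> P \<Longrightarrow> s < Max P \<Longrightarrow> 0 \<le> f s (next_point P s)"
  shows "0 \<le> partition_sum f P"
  unfolding partition_sum_def using assms by (intro sum_nonneg) auto

lemma partition_sum_split_interval:
  assumes "finite P" "a \<in> P" "b \<in> P" "a \<le> b"
  shows "partition_sum g P
    = partition_sum g (P \<inter> {..a}) + partition_sum g (P \<inter> {a..b}) + partition_sum g (P \<inter> {b..})"
proof -
  have "P \<inter> {a..} \<inter> {..b} = P \<inter> {a..b}" "P \<inter> {a..} \<inter> {b..} = P \<inter> {b..}" using assms by auto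
  then show ?thesis
    using assms partition_sum_split[OF assms(1,2), of g] partition_sum_split[of "P \<inter> {a..}" b g]
    by (simp add: add.assoc)
qed

lemma partition_sum_restrict_le:
  fixes g :: "real \<Rightarrow> real \<Rightarrow> real"
  assumes "finite P" "a \<in> P" "b \<in> P" "a \<le> b" "\<And>s t. 0 \<le> g s t"
  shows "partition_sum g (P \<inter> {a..b}) \<le> partition_sum g P"
proof -
  have "0 \<le> partition_sum g (P \<inter> {..a})" "0 \<le> partition_sum g (P \<inter> {b..})"
    using assms(5) by (auto intro!: partition_sum_nonneg)
  then show ?thesis using partition_sum_split_interval[OF assms(1-4), of g] by linarith
qed

lemma partition_sum_remove_next:
  fixes g :: "real \<Rightarrow> real \<Rightarrow> 'a::ab_group_add"
  assumes P: "finite P" "s \<in> P" "s < Max P" "next_point P s < Max P"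
  defines "c \<equiv> next_point P s"
  defines "w \<equiv> next_point P c"
  shows "partition_sum g P = partition_sum g (P - {c}) + (g s c + g c w - g s w)"
proof -
  have c: "c \<in> P" "s < c" "\<And>u. u \<in> P \<Longrightarrow> s < u \<Longrightarrow> c \<le> u"
    unfolding c_def using next_point_in[OF P(1-3)] next_point_gt[OF P(1-3)] next_point_le[OF P(1-3)] by auto
  have w: "w \<in> P" "c < w" "\<And>u. u \<in> P \<Longrightarrow> c < u \<Longrightarrow> w \<le> u"
    unfolding w_def using next_point_in[OF P(1) c(1)] next_point_gt[OF P(1) c(1)] next_point_le[OF P(1) c(1)]
      P(4) c_def by auto
  have three: "P \<inter> {s..w} = {s, c, w}"
  proof
    show "P \<inter> {s..w} \<subseteq> {s, c, w}"
    proof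
      fix u assume u: "u \<in> P \<inter> {s..w}"
      show "u \<in> {s, c, w}"
      proof (rule ccontr)
        assume "u \<notin> {s, c, w}"
        then have "c < u" using u c(3)[of u] by auto
        then show False using u w(3)[of u] \<open>u \<notin> {s, c, w}\<close> by auto
      qed
    qed
  qed (use c w P in auto)
  have fin: "finite (P - {c})" using P by auto
  have "partition_sum g P = partition_sum g (P \<inter> {..s}) + partition_sum g {s, c, w} + partition_sum g (P \<inter> {w..})"
    using partition_sum_split_interval[OF P(1,2) w(1), of g] c w three by simp
  moreover have "partition_sum g (P - {c})
      = partition_sum g (P \<inter> {..s}) + partition_sum g {s, w} + partition_sum g (P \<inter> {w..})"
  proof -
    have "(P - {c}) \<inter> {..s} = P \<inter> {..s}" "(P - {c}) \<inter> {s..w} = {s, w}" "(P - {c}) \<inter> {w..} = P \<inter> {w..}"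
      using three c w by auto
    then show ?thesis using partition_sum_split_interval[OF fin, of s w g] P c w by auto
  qed
  moreover have "partition_sum g {s, c, w} = g s c + g c w"
    using partition_sum_Un[of "{s, c}" "{c, w}" s c w g] partition_sum_pair[of s c g] partition_sum_pair[of c w g] c w
    by (simp add: insert_commute)
  moreover have "partition_sum g {s, w} = g s w" using c w by (intro partition_sum_pair) auto
  ultimately show ?thesis by (simp add: algebra_simps)
qed

lemma Max_Diff_Max:
  assumes "finite P" "P - {Max P} \<noteq> {}"
  defines "b \<equiv> Max (P - {Max P})"
  shows "b \<in> P" "b < Max P" "P \<inter> {..b} = P - {Max P}" "P \<inter> {b..} = {b, Max P}"
    and "next_point P b = Max P" "Min (P - {Max P}) = Min P"
    and "{s\<in>P. s < Max P} = insert b {s\<in>P - {Max P}. s < b}"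
    and "\<And>s. s \<in> P \<Longrightarrow> s < b \<Longrightarrow> next_point P s \<le> b"
    and "\<And>s. s \<in> P \<Longrightarrow> s < b \<Longrightarrow> next_point (P - {Max P}) s = next_point P s"
proof -
  have f': "finite (P - {Max P})" using assms by auto
  have bP: "b \<in> P - {Max P}" unfolding b_def using Max_in[OF f' assms(2)] .
  then show "b \<in> P" by auto
  have MP: "Max P \<in> P" using assms by (intro Max_in) auto
  have "b \<le> Max P" using bP assms by auto
  then show lt: "b < Max P" using bP by auto
  have le: "u \<le> b" if "u \<in> P" "u \<noteq> Max P" for u
    unfolding b_def using that f' by auto
  show "P \<inter> {..b} = P - {Max P}" using le lt by auto
  show "P \<inter> {b..} = {b, Max P}" using le lt bP MP by force
  show "next_point P b = Max P"
    using le lt MP by (intro next_point_eqI[OF assms(1)]) force+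
  have "Min P \<in> P" "Min P \<le> b" using assms \<open>b \<in> P\<close> by (auto intro: Min_in)
  then have "Min P \<in> P - {Max P}" using lt by auto
  then show "Min (P - {Max P}) = Min P"
    using f' assms(1) by (intro Min_eqI) auto
  show "{s\<in>P. s < Max P} = insert b {s\<in>P - {Max P}. s < b}"
  proof (intro set_eqI iffI)
    fix s assume "s \<in> {s\<in>P. s < Max P}"
    then show "s \<in> insert b {s\<in>P - {Max P}. s < b}" using le[of s] by force
  qed (use bP lt in auto)
  fix s assume s: "s \<in> P" "s < b"
  then show nb: "next_point P s \<le> b" using \<open>b \<in> P\<close> lt by (intro next_point_le[OF assms(1)]) auto
  show "next_point (P - {Max P}) s = next_point P s"
    using s lt nb next_point_in[OF assms(1) s(1)] by (intro next_point_subset[OF assms(1)]) auto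
qed

lemma partition_sum_card_le_two:
  assumes "finite P" "P \<noteq> {}" "Min P < Max P" "card P \<le> 2"
  shows "partition_sum g P = g (Min P) (Max P)"
proof -
  have "Min P \<in> P" "Max P \<in> P" using assms(1,2) by auto
  moreover have "card {Min P, Max P} = 2" using assms(3) by auto
  ultimately have "P = {Min P, Max P}" using assms(1,4) card_mono[of P "{Min P, Max P}"]
    by (intro card_subset_eq[symmetric]) auto
  then show ?thesis using partition_sum_pair[OF assms(3)] by simp
qed

lemma card_points_before_last_cell:
  assumes P: "finite P" "3 \<le> card P"
  shows "card P - 2 \<le> card {s\<in>P. s < Max P \<and> next_point P s < Max P}"
proof -
  let ?b = "Max P"
  have Pne: "P \<noteq> {}" using P by auto
  have "P - {?b} \<noteq> {}"
  proof
    assume "P - {?b} = {}"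
    then have "card P \<le> 1" using card_mono[of "{?b}" P] by auto
    then show False using P by auto
  qed
  note mr = Max_Diff_Max[OF P(1) this]
  let ?b' = "Max (P - {?b})"
  have sub: "P - {?b, ?b'} \<subseteq> {s\<in>P. s < ?b \<and> next_point P s < ?b}"
  proof
    fix s assume s: "s \<in> P - {?b, ?b'}"
    then have "s \<le> ?b'" using mr(3) by blast
    then have "s < ?b'" "s < ?b" using s mr(2) by auto
    then have "next_point P s \<le> ?b'" using next_point_le[OF P(1), of s ?b'] s mr by auto
    then show "s \<in> {s\<in>P. s < ?b \<and> next_point P s < ?b}" using s \<open>s < ?b\<close> mr by auto
  qed
  have "card (P - {?b, ?b'}) = card P - 2"
    using mr Max_in[OF P(1) Pne] P(1) by (subst card_Diff_subset) auto
  then show ?thesis using card_mono[OF _ sub] P(1) by simp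
qed

lemma partition_sum_le_superadditive:
  fixes w :: "real \<Rightarrow> real \<Rightarrow> real"
  assumes "finite P" "P \<noteq> {}" "P \<subseteq> {lo..hi}"
    and superadd: "\<And>a c b. lo \<le> a \<Longrightarrow> a \<le> c \<Longrightarrow> c \<le> b \<Longrightarrow> b \<le> hi \<Longrightarrow> w a c + w c b \<le> w a b"
    and diag: "\<And>a. lo \<le> a \<Longrightarrow> a \<le> hi \<Longrightarrow> 0 \<le> w a a"
  shows "partition_sum w P \<le> w (Min P) (Max P)"
  using assms(1-3)
proof (induction "card P" arbitrary: P rule: less_induct)
  case less
  show ?case
  proof (cases "P - {Max P} = {}")
    case True
    then have "P = {Max P}" using less.prems Max_in by blast
    then show ?thesis using diag less.prems by (metis partition_sum_singleton Min_singleton atLeastAtMost_iff insert_subset)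
  next
    case False
    let ?b = "Max P" let ?b' = "Max (P - {Max P})"
    note mr = Max_Diff_Max[OF less.prems(1) False]
    have bP: "?b \<in> P" using less.prems Max_in by blast
    have "partition_sum w P = partition_sum w (P - {?b}) + w ?b' ?b"
      using partition_sum_split[OF less.prems(1) mr(1), of w] mr partition_sum_pair by simp
    also have "partition_sum w (P - {?b}) \<le> w (Min P) ?b'"
      using less.hyps[of "P - {?b}"] card_Diff1_less[OF less.prems(1) bP] less.prems False mr(6) by auto
    also have "w (Min P) ?b' + w ?b' ?b \<le> w (Min P) ?b"
      using less.prems mr(1,2) Min_in[OF less.prems(1,2)] Min_le[OF less.prems(1) mr(1)] bP
      by (intro superadd) auto
    finally show ?thesis by simp
  qed
qed

lemma partition_sum_refinement:
  assumes "finite P" "P0 \<subseteq> P" "P0 \<noteq> {}" "P \<subseteq> {Min P0..Max P0}"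
  shows "partition_sum g P = (\<Sum>s\<in>{s\<in>P0. s < Max P0}. partition_sum g (P \<inter> {s..next_point P0 s}))"
  using assms
proof (induction "card P0" arbitrary: P0 P rule: less_induct)
  case less
  have f0: "finite P0" using less.prems finite_subset by blast
  show ?case
  proof (cases "P0 - {Max P0} = {}")
    case True
    then have P0: "P0 = {Max P0}" using less.prems Max_in[OF f0] by blast
    then have "Min P0 = Max P0" by (metis Min_singleton)
    then have "P = {Max P0}" using less.prems P0 by auto
    moreover have "{s\<in>P0. s < Max P0} = {}" using True by auto
    ultimately show ?thesis by (simp only: sum.empty partition_sum_singleton)
  next
    case False
    let ?b = "Max P0" let ?b' = "Max (P0 - {Max P0})"
    let ?cell = "\<lambda>s. partition_sum g (P \<inter> {s..next_point P0 s})"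
    note mr = Max_Diff_Max[OF f0 False]
    have bP: "?b \<in> P0" using less.prems Max_in f0 by blast
    have b'P: "?b' \<in> P" using mr(1) less.prems(2) by auto
    have "P \<inter> {?b'..} = P \<inter> {?b'..next_point P0 ?b'}" using mr(5) less.prems(4) by auto
    then have "partition_sum g P = partition_sum g (P \<inter> {..?b'}) + ?cell ?b'"
      using partition_sum_split[OF less.prems(1) b'P, of g] by simp
    also have "partition_sum g (P \<inter> {..?b'})
        = (\<Sum>s\<in>{s\<in>P0 - {?b}. s < ?b'}. partition_sum g (P \<inter> {..?b'} \<inter> {s..next_point (P0 - {?b}) s}))"
    proof (rule less.hyps)
      show "card (P0 - {?b}) < card P0" using card_Diff1_less[OF f0 bP] .
      show "finite (P \<inter> {..?b'})" "P0 - {?b} \<subseteq> P \<inter> {..?b'}" "P0 - {?b} \<noteq> {}"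
        using less.prems(1,2) mr(3) False by auto
      show "P \<inter> {..?b'} \<subseteq> {Min (P0 - {?b})..Max (P0 - {?b})}" using less.prems(4) mr(6) by auto
    qed
    also have "\<dots> = (\<Sum>s\<in>{s\<in>P0 - {?b}. s < ?b'}. ?cell s)"
    proof (rule sum.cong[OF refl])
      fix s assume "s \<in> {s\<in>P0 - {?b}. s < ?b'}"
      then have "next_point P0 s \<le> ?b'" "next_point (P0 - {?b}) s = next_point P0 s" using mr(8,9) by auto
      then show "partition_sum g (P \<inter> {..?b'} \<inter> {s..next_point (P0 - {?b}) s}) = ?cell s"
        by (intro arg_cong[where f="partition_sum g"]) auto
    qed
    also have "(\<Sum>s\<in>{s\<in>P0 - {?b}. s < ?b'}. ?cell s) + ?cell ?b' = (\<Sum>s\<in>{s\<in>P0. s < ?b}. ?cell s)"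
      unfolding mr(7) using f0 by (simp add: add.commute)
    finally show ?thesis .
  qed
qed

lemma refinement_cell_subset:
  assumes "finite P" "P0 \<subseteq> P" "P0 \<noteq> {}" "Min P0 = Min P" "Max P0 = Max P" "s \<in> P" "s < Max P"
  obtains a where "a \<in> P0" "a < Max P0" "a \<le> s" "next_point P s \<le> next_point P0 a"
proof -
  have f0: "finite P0" using assms finite_subset by blast
  define S where "S = {u\<in>P0. u \<le> s}"
  have "Min P0 \<in> S" unfolding S_def using Min_in[OF f0 assms(3)] assms(1,4,6) by auto
  then have S: "S \<noteq> {}" "finite S" unfolding S_def using f0 by auto
  define a where "a = Max S"
  have a: "a \<in> P0" "a \<le> s" using Max_in[OF S(2,1)] unfolding a_def S_def by auto
  have aM: "a < Max P0" using a assms by auto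
  have n: "next_point P0 a \<in> P0" "a < next_point P0 a"
    using next_point_in[OF f0 a(1) aM] next_point_gt[OF f0 a(1) aM] by auto
  have "s < next_point P0 a"
  proof (rule ccontr)
    assume "\<not> s < next_point P0 a"
    then have "next_point P0 a \<le> a" using n S unfolding a_def S_def by auto
    then show False using n by auto
  qed
  then have "next_point P s \<le> next_point P0 a" using next_point_le[OF assms(1,6,7)] n assms by auto
  then show ?thesis using that a aM by auto
qed

lemma partition_ofD:
  assumes "partition_of a b P"
  shows "finite P" "P \<noteq> {}" "Min P = a" "Max P = b" "a \<le> b"
proof -
  show f: "finite P" "P \<noteq> {}" using assms unfolding partition_of_def by auto
  show "Min P = a" using assms f unfolding partition_of_def by (intro Min_eqI) auto
  show "Max P = b" using assms f unfolding partition_of_def by (intro Max_eqI) auto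
  show "a \<le> b" using assms unfolding partition_of_def by auto
qed

lemma partition_of_pair: "a \<le> b \<Longrightarrow> partition_of a b {a, b}"
  unfolding partition_of_def by auto

lemma partition_of_Un:
  assumes "partition_of a c P1" "partition_of c b P2"
  shows "partition_of a b (P1 \<union> P2)"
proof -
  have "a \<le> c" "c \<le> b" using assms partition_ofD(5) by blast+
  then show ?thesis using assms unfolding partition_of_def by auto
qed

section \<open>Limits along refinements of partitions\<close>

lemma cauchy_dist_imp_tendsto:
  fixes f :: "'a \<Rightarrow> 'b::banach"
  assumes "F \<noteq> bot"
    and "\<And>e. e > 0 \<Longrightarrow> \<exists>P. eventually P F \<and> (\<forall>u v. P u \<and> P v \<longrightarrow> dist (f u) (f v) < e)"
  shows "\<exists>L. (f \<longlongrightarrow> L) F"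
proof -
  have "cauchy_filter (filtermap f F)"
    unfolding cauchy_filter_metric_filtermap using assms(2) by blast
  moreover have "filtermap f F \<noteq> bot" using assms(1) by (simp add: filtermap_bot_iff)
  ultimately obtain L where "filtermap f F \<le> nhds L"
    using complete_UNIV unfolding complete_uniform by auto
  then show ?thesis unfolding filterlim_def by blast
qed

definition refinement_filter :: "real \<Rightarrow> real set filter" where
  "refinement_filter t = (INF P0\<in>{P. partition_of 0 t P}. principal {P. partition_of 0 t P \<and> P0 \<subseteq> P})"

lemma eventually_refinement_filter:
  assumes "0 \<le> t"
  shows "eventually Q (refinement_filter t) \<longleftrightarrow>
    (\<exists>P0. partition_of 0 t P0 \<and> (\<forall>P. partition_of 0 t P \<and> P0 \<subseteq> P \<longrightarrow> Q P))"
  unfolding refinement_filter_def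
proof (subst eventually_INF_base)
  show "{P. partition_of 0 t P} \<noteq> {}" using partition_of_pair[OF assms] by blast
  fix P1 P2 assume "P1 \<in> {P. partition_of 0 t P}" "P2 \<in> {P. partition_of 0 t P}"
  then show "\<exists>P0\<in>{P. partition_of 0 t P}. principal {P. partition_of 0 t P \<and> P0 \<subseteq> P}
      \<le> inf (principal {P. partition_of 0 t P \<and> P1 \<subseteq> P}) (principal {P. partition_of 0 t P \<and> P2 \<subseteq> P})"
    by (intro bexI[of _ "P1 \<union> P2"]) (auto simp: partition_of_def)
qed (auto simp: eventually_principal)

lemma refinement_filter_neq_bot: "0 \<le> t \<Longrightarrow> refinement_filter t \<noteq> bot"
  unfolding trivial_limit_def eventually_refinement_filter by blast

lemma RRS_has_limit_iff_tendsto: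
  "0 \<le> t \<Longrightarrow> RRS_has_limit S t I \<longleftrightarrow> (S \<longlongrightarrow> I) (refinement_filter t)"
  unfolding RRS_has_limit_def tendsto_iff eventually_refinement_filter dist_norm by blast

lemma RRS_has_limit_CauchyI:
  fixes S :: "real set \<Rightarrow> 'a::banach"
  assumes t: "0 \<le> t"
    and cauchy: "\<And>e. e > 0 \<Longrightarrow> \<exists>P0. partition_of 0 t P0 \<and>
      (\<forall>P. partition_of 0 t P \<and> P0 \<subseteq> P \<longrightarrow> norm (S P - S P0) \<le> e)"
  shows "\<exists>I. RRS_has_limit S t I"
proof -
  have "\<exists>L. (S \<longlongrightarrow> L) (refinement_filter t)"
  proof (rule cauchy_dist_imp_tendsto[OF refinement_filter_neq_bot[OF t]])
    fix e :: real assume "e > 0"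
    then obtain P0 where P0: "partition_of 0 t P0"
      and close: "\<And>P. partition_of 0 t P \<Longrightarrow> P0 \<subseteq> P \<Longrightarrow> norm (S P - S P0) \<le> e / 3"
      using cauchy[of "e / 3"] by auto
    show "\<exists>Q. eventually Q (refinement_filter t) \<and> (\<forall>u v. Q u \<and> Q v \<longrightarrow> dist (S u) (S v) < e)"
    proof (intro exI conjI allI impI)
      show "eventually (\<lambda>P. partition_of 0 t P \<and> P0 \<subseteq> P) (refinement_filter t)"
        unfolding eventually_refinement_filter[OF t] using P0 by blast
      fix u v assume "(partition_of 0 t u \<and> P0 \<subseteq> u) \<and> (partition_of 0 t v \<and> P0 \<subseteq> v)"
      then have "norm (S u - S P0) \<le> e / 3" "norm (S P0 - S v) \<le> e / 3"
        using close[of u] close[of v] by (auto simp: norm_minus_commute)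
      then have "dist (S u) (S v) \<le> e / 3 + e / 3" unfolding dist_norm by (rule norm_diff_triangle_le)
      then show "dist (S u) (S v) < e" using \<open>e > 0\<close> by linarith
    qed
  qed
  then show ?thesis using RRS_has_limit_iff_tendsto[OF t] by blast
qed

lemma filterlim_Int_finite_subsets_at_top:
  assumes "0 \<le> t" "A \<subseteq> {0..t}"
  shows "filterlim (\<lambda>P. P \<inter> A) (finite_subsets_at_top A) (refinement_filter t)"
  unfolding filterlim_iff eventually_finite_subsets_at_top eventually_refinement_filter[OF assms(1)]
proof (intro allI impI)
  fix Q assume "\<exists>X. finite X \<and> X \<subseteq> A \<and> (\<forall>Y. finite Y \<and> X \<subseteq> Y \<and> Y \<subseteq> A \<longrightarrow> Q Y)"
  then obtain X where X: "finite X" "X \<subseteq> A" "\<And>Y. finite Y \<Longrightarrow> X \<subseteq> Y \<Longrightarrow> Y \<subseteq> A \<Longrightarrow> Q Y" by auto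
  show "\<exists>P0. partition_of 0 t P0 \<and> (\<forall>P. partition_of 0 t P \<and> P0 \<subseteq> P \<longrightarrow> Q (P \<inter> A))"
  proof (intro exI[of _ "X \<union> {0, t}"] conjI allI impI)
    show "partition_of 0 t (X \<union> {0, t})" using X assms unfolding partition_of_def by auto
    fix P assume "partition_of 0 t P \<and> X \<union> {0, t} \<subseteq> P"
    then show "Q (P \<inter> A)" using X unfolding partition_of_def by (intro X(3)) auto
  qed
qed

lemma eventually_partition_of: "0 \<le> t \<Longrightarrow> eventually (partition_of 0 t) (refinement_filter t)"
  unfolding eventually_refinement_filter using partition_of_pair by blast

lemma has_fwd_young_iff_tendsto:
  assumes "0 \<le> t"
  shows "has_fwd_young x y t I \<longleftrightarrow>
    (partition_sum (\<lambda>a b. blinfun_apply (x a) (y b - y a)) \<longlongrightarrow> I) (refinement_filter t)"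
  unfolding has_fwd_young_def RRS_has_limit_iff_tendsto[OF assms]
  by (intro tendsto_cong eventually_mono[OF eventually_partition_of[OF assms]])
    (simp add: fwd_sum_eq_partition_sum partition_ofD(1))

lemma has_bwd_young_iff_tendsto:
  assumes "0 \<le> t"
  shows "has_bwd_young x y t I \<longleftrightarrow>
    (partition_sum (\<lambda>a b. blinfun_apply (x b) (y b - y a)) \<longlongrightarrow> I) (refinement_filter t)"
  unfolding has_bwd_young_def RRS_has_limit_iff_tendsto[OF assms]
  by (intro tendsto_cong eventually_mono[OF eventually_partition_of[OF assms]])
    (simp add: bwd_sum_eq_partition_sum partition_ofD(1))

section \<open>Controls and fine partitions\<close>

lemma powr_minus_one_mult:
  fixes x r :: real
  assumes "0 \<le> x"
  shows "x powr (r - 1) * x = x powr r"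
proof (cases "x = 0")
  case False
  then show ?thesis using assms powr_add[of x "r - 1" 1] by simp
qed simp

locale control =
  fixes \<omega> :: "real \<Rightarrow> real \<Rightarrow> real" and T :: real
  assumes T_nonneg: "0 \<le> T"
    and control_nonneg: "\<And>a b. 0 \<le> a \<Longrightarrow> a \<le> b \<Longrightarrow> b \<le> T \<Longrightarrow> 0 \<le> \<omega> a b"
    and control_superadditive:
      "\<And>a c b. 0 \<le> a \<Longrightarrow> a \<le> c \<Longrightarrow> c \<le> b \<Longrightarrow> b \<le> T \<Longrightarrow> \<omega> a c + \<omega> c b \<le> \<omega> a b"
begin

lemma control_mono:
  assumes "0 \<le> a" "a \<le> u" "u \<le> v" "v \<le> b" "b \<le> T"
  shows "\<omega> u v \<le> \<omega> a b"
proof -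
  have "\<omega> a u + \<omega> u b \<le> \<omega> a b" "\<omega> u v + \<omega> v b \<le> \<omega> u b"
    using assms by (intro control_superadditive; simp)+
  moreover have "0 \<le> \<omega> a u" "0 \<le> \<omega> v b" using assms by (auto intro: control_nonneg)
  ultimately show ?thesis by linarith
qed

lemma partition_sum_control_le:
  assumes "finite P" "P \<noteq> {}" "P \<subseteq> {0..T}"
  shows "partition_sum \<omega> P \<le> \<omega> (Min P) (Max P)"
  using assms by (intro partition_sum_le_superadditive[where lo = 0 and hi = T])
    (auto intro: control_superadditive control_nonneg)

lemma partition_sum_control_powr_le:
  assumes "finite P" "P \<noteq> {}" "P \<subseteq> {0..T}" "1 \<le> r"
  shows "partition_sum (\<lambda>a b. \<omega> a b powr r) P \<le> \<omega> 0 T powr r"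
proof -
  let ?W = "\<omega> 0 T"
  have W: "0 \<le> ?W" using T_nonneg by (intro control_nonneg) auto
  have "partition_sum (\<lambda>a b. \<omega> a b powr r) P \<le> partition_sum (\<lambda>a b. ?W powr (r - 1) * \<omega> a b) P"
  proof (rule partition_sum_mono)
    fix s assume s: "s \<in> P" "s < Max P"
    let ?a = "\<omega> s (next_point P s)"
    have "0 \<le> ?a" "?a \<le> ?W"
      using s assms next_point_in[OF assms(1) s] next_point_gt[OF assms(1) s]
      by (auto intro!: control_nonneg control_mono)
    then have "?a powr r = ?a powr (r - 1) * ?a" by (simp add: powr_minus_one_mult)
    also have "\<dots> \<le> ?W powr (r - 1) * ?a" using \<open>0 \<le> ?a\<close> \<open>?a \<le> ?W\<close> assms(4)
      by (intro mult_right_mono powr_mono2) auto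
    finally show "?a powr r \<le> ?W powr (r - 1) * ?a" .
  qed
  also have "\<dots> = ?W powr (r - 1) * partition_sum \<omega> P" by (rule partition_sum_mult_left)
  also have "\<dots> \<le> ?W powr (r - 1) * ?W"
  proof (rule mult_left_mono)
    have "Min P \<in> P" "Max P \<in> P" "Min P \<le> Max P" using assms(1,2) by auto
    then have "\<omega> (Min P) (Max P) \<le> ?W" using assms(3) by (intro control_mono) auto
    then show "partition_sum \<omega> P \<le> ?W" using partition_sum_control_le[OF assms(1-3)] by linarith
  qed simp
  also have "\<dots> = ?W powr r" using W by (rule powr_minus_one_mult)
  finally show ?thesis .
qed

end

context control
begin

lemma control_small_right:
  assumes "0 \<le> r" "0 < e"
  obtains d where "0 < d" "\<And>u v. r < u \<Longrightarrow> u \<le> v \<Longrightarrow> v < r + d \<Longrightarrow> v \<le> T \<Longrightarrow> \<omega> u v \<le> e"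
proof -
  have "\<exists>d>0. \<forall>u v. r < u \<and> u \<le> v \<and> v < r + d \<and> v \<le> T \<longrightarrow> \<omega> u v \<le> e"
  proof (rule ccontr)
    assume "\<not> ?thesis"
    then have big: "\<And>d. d > 0 \<Longrightarrow> \<exists>u v. r < u \<and> u \<le> v \<and> v < r + d \<and> v \<le> T \<and> e < \<omega> u v"
      by (meson not_le)
    have many: "real N * e \<le> \<omega> r d" if "r < d" "d \<le> T" for N d
      using that
    proof (induction N arbitrary: d)
      case 0
      then show ?case using assms by (auto intro: control_nonneg)
    next
      case (Suc N)
      obtain u v where uv: "r < u" "u \<le> v" "v < d" "v \<le> T" "e < \<omega> u v"
        using big[of "d - r"] Suc.prems by auto
      have "real N * e \<le> \<omega> r u" using Suc uv by auto
      moreover have "\<omega> r u + \<omega> u d \<le> \<omega> r d" using assms uv Suc.prems by (intro control_superadditive) auto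
      moreover have "\<omega> u v \<le> \<omega> u d" using assms uv Suc.prems by (intro control_mono) auto
      ultimately show ?case using uv by (simp add: algebra_simps)
    qed
    obtain u v where "r < u" "u \<le> v" "v \<le> T" using big[of 1] by auto
    then have rT: "r < T" by auto
    obtain N :: nat where "\<omega> 0 T / e < N" using reals_Archimedean2 by blast
    then have "\<omega> 0 T < N * e" using assms by (simp add: field_simps)
    moreover have "N * e \<le> \<omega> r T" using many rT by auto
    moreover have "\<omega> r T \<le> \<omega> 0 T" using assms rT by (intro control_mono) auto
    ultimately show False by linarith
  qed
  then show ?thesis using that by blast
qed

lemma control_small_left:
  assumes "r \<le> T" "0 < e"
  obtains d where "0 < d" "\<And>u v. r - d < u \<Longrightarrow> u \<le> v \<Longrightarrow> v < r \<Longrightarrow> 0 \<le> u \<Longrightarrow> \<omega> u v \<le> e"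
proof -
  have "\<exists>d>0. \<forall>u v. r - d < u \<and> u \<le> v \<and> v < r \<and> 0 \<le> u \<longrightarrow> \<omega> u v \<le> e"
  proof (rule ccontr)
    assume "\<not> ?thesis"
    then have big: "\<And>d. d > 0 \<Longrightarrow> \<exists>u v. r - d < u \<and> u \<le> v \<and> v < r \<and> 0 \<le> u \<and> e < \<omega> u v"
      by (meson not_le)
    have many: "real N * e \<le> \<omega> d r" if "d < r" "0 \<le> d" for N d
      using that
    proof (induction N arbitrary: d)
      case 0
      then show ?case using assms by (auto intro: control_nonneg)
    next
      case (Suc N)
      obtain u v where uv: "d < u" "u \<le> v" "v < r" "0 \<le> u" "e < \<omega> u v"
        using big[of "r - d"] Suc.prems by auto
      have "real N * e \<le> \<omega> v r" using Suc uv by auto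
      moreover have "\<omega> d v + \<omega> v r \<le> \<omega> d r" using assms uv Suc.prems by (intro control_superadditive) auto
      moreover have "\<omega> u v \<le> \<omega> d v" using assms uv Suc.prems by (intro control_mono) auto
      ultimately show ?case using uv by (simp add: algebra_simps)
    qed
    obtain u v where "0 \<le> u" "u \<le> v" "v < r" using big[of 1] by auto
    then have r0: "0 < r" by auto
    obtain N :: nat where "\<omega> 0 T / e < N" using reals_Archimedean2 by blast
    then have "\<omega> 0 T < N * e" using assms by (simp add: field_simps)
    moreover have "N * e \<le> \<omega> 0 r" using many r0 by auto
    moreover have "\<omega> 0 r \<le> \<omega> 0 T" using assms r0 by (intro control_mono) auto
    ultimately show False by linarith
  qed
  then show ?thesis using that by blast
qed

text \<open>[a, b] is e-fine if \<omega>(a+, b) \<le> e or \<omega>(a, b-) \<le> e: the control may jump by more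
  than e only at an endpoint.\<close>

definition fine_interval :: "real \<Rightarrow> real \<Rightarrow> real \<Rightarrow> bool" where
  "fine_interval e a b \<longleftrightarrow> (\<forall>u v. a < u \<and> u \<le> v \<and> v \<le> b \<longrightarrow> \<omega> u v \<le> e) \<or>
                          (\<forall>u v. a \<le> u \<and> u \<le> v \<and> v < b \<longrightarrow> \<omega> u v \<le> e)"

definition fine_partition :: "real \<Rightarrow> real set \<Rightarrow> bool" where
  "fine_partition e P \<longleftrightarrow> (\<forall>s\<in>P. s < Max P \<longrightarrow> fine_interval e s (next_point P s))"

lemma fine_interval_subinterval: "fine_interval e a b \<Longrightarrow> a \<le> s \<Longrightarrow> s' \<le> b \<Longrightarrow> fine_interval e s s'"
  unfolding fine_interval_def by (metis order.strict_trans1 order.strict_trans2 order.trans)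

lemma fine_interval_min_le:
  assumes "fine_interval e a b" "a \<le> s" "s < c" "c \<le> w" "w \<le> b" "c < b"
  shows "min (\<omega> s c) (\<omega> c w) \<le> e"
  using assms(1) unfolding fine_interval_def
proof
  assume "\<forall>u v. a < u \<and> u \<le> v \<and> v \<le> b \<longrightarrow> \<omega> u v \<le> e"
  then have "\<omega> c w \<le> e" using assms by auto
  then show ?thesis by simp
next
  assume "\<forall>u v. a \<le> u \<and> u \<le> v \<and> v < b \<longrightarrow> \<omega> u v \<le> e"
  then have "\<omega> s c \<le> e" using assms by auto
  then show ?thesis by simp
qed

lemma fine_partition_singleton: "fine_partition e {a}"
  unfolding fine_partition_def by auto

lemma fine_partition_pair: "a < b \<Longrightarrow> fine_interval e a b \<Longrightarrow> fine_partition e {a, b}"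
  unfolding fine_partition_def using next_point_pair by auto

lemma fine_partition_refine:
  assumes "partition_of a b P0" "partition_of a b P" "P0 \<subseteq> P" "fine_partition e P0"
  shows "fine_partition e P"
  unfolding fine_partition_def
proof (intro ballI impI)
  fix s assume s: "s \<in> P" "s < Max P"
  note P0 = partition_ofD[OF assms(1)] and P = partition_ofD[OF assms(2)]
  obtain c where c: "c \<in> P0" "c < Max P0" "c \<le> s" "next_point P s \<le> next_point P0 c"
    using refinement_cell_subset[OF P(1) assms(3) P0(2) _ _ s] P0 P by auto
  then have "fine_interval e c (next_point P0 c)" using assms(4) unfolding fine_partition_def by auto
  then show "fine_interval e s (next_point P s)" using c(3,4) by (rule fine_interval_subinterval)
qed

lemma fine_partition_Un:
  assumes P1: "partition_of a c P1" and P2: "partition_of c b P2"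
    and fine: "fine_partition e P1" "fine_partition e P2"
  shows "fine_partition e (P1 \<union> P2)"
  unfolding fine_partition_def
proof (intro ballI impI)
  let ?P = "P1 \<union> P2"
  fix s assume s: "s \<in> ?P" "s < Max ?P"
  note m1 = partition_ofD[OF P1] and m2 = partition_ofD[OF P2]
  have f: "finite ?P" using m1 m2 by auto
  have sub: "P1 \<subseteq> {a..c}" "P2 \<subseteq> {c..b}" "c \<in> P1" "c \<in> P2" "b \<in> P2"
    using P1 P2 unfolding partition_of_def by auto
  have MaxP: "Max ?P = b" using partition_ofD(4)[OF partition_of_Un[OF P1 P2]] .
  have nx: "next_point ?P s \<in> ?P" "s < next_point ?P s"
    using next_point_in[OF f s] next_point_gt[OF f s] by auto
  show "fine_interval e s (next_point ?P s)"
  proof (cases "s < c")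
    case True
    have "next_point ?P s \<le> c" using next_point_le[OF f s, of c] sub True by auto
    then have "next_point ?P s \<in> P1" using nx sub by auto
    then have "next_point P1 s = next_point ?P s" using s True sub by (intro next_point_subset[OF f]) auto
    moreover have "s \<in> P1" "s < Max P1" using s True sub m1 by auto
    ultimately show ?thesis using fine(1) unfolding fine_partition_def by metis
  next
    case False
    have "next_point ?P s \<in> P2" using nx sub False by auto
    then have "next_point P2 s = next_point ?P s" using s False sub by (intro next_point_subset[OF f]) auto
    moreover have "s \<in> P2" "s < Max P2" using s False sub m2 MaxP by auto
    ultimately show ?thesis using fine(2) unfolding fine_partition_def by metis
  qed
qed

lemma fine_partition_near:
  assumes r: "0 \<le> r" "r \<le> T" and e: "0 < e"
  obtains d where "0 < d"
    "\<And>a b. 0 \<le> a \<Longrightarrow> a < b \<Longrightarrow> b \<le> T \<Longrightarrow> r - d < a \<Longrightarrow> b < r + d \<Longrightarrow>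
      \<exists>Q. partition_of a b Q \<and> fine_partition e Q"
proof -
  obtain dR where dR: "0 < dR" "\<And>u v. r < u \<Longrightarrow> u \<le> v \<Longrightarrow> v < r + dR \<Longrightarrow> v \<le> T \<Longrightarrow> \<omega> u v \<le> e"
    using control_small_right[OF r(1) e] by blast
  obtain dL where dL: "0 < dL" "\<And>u v. r - dL < u \<Longrightarrow> u \<le> v \<Longrightarrow> v < r \<Longrightarrow> 0 \<le> u \<Longrightarrow> \<omega> u v \<le> e"
    using control_small_left[OF r(2) e] by blast
  show ?thesis
  proof (rule that[of "min dR dL"])
    show "0 < min dR dL" using dR dL by simp
    fix a b assume ab: "0 \<le> a" "a < b" "b \<le> T" "r - min dR dL < a" "b < r + min dR dL"
    have right: "fine_interval e s s'" if "r \<le> s" "s' \<le> b" for s s'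
      unfolding fine_interval_def using dR(2) that ab by (intro disjI1 allI impI) auto
    have left: "fine_interval e s s'" if "a \<le> s" "s' \<le> r" for s s'
      unfolding fine_interval_def using dL(2) that ab by (intro disjI2 allI impI) auto
    consider "r \<le> a" | "b \<le> r" | "a < r \<and> r < b" by linarith
    then show "\<exists>Q. partition_of a b Q \<and> fine_partition e Q"
    proof cases
      case 1
      then show ?thesis using fine_partition_pair[OF ab(2) right] partition_of_pair[of a b] ab by auto
    next
      case 2
      then show ?thesis using fine_partition_pair[OF ab(2) left] partition_of_pair[of a b] ab by auto
    next
      case 3
      have "partition_of a r {a, r}" "partition_of r b {r, b}" using 3 partition_of_pair by auto
      moreover have "fine_partition e {a, r}" "fine_partition e {r, b}"
        using 3 fine_partition_pair[OF _ left[of a r]] fine_partition_pair[OF _ right[of r b]] by auto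
      ultimately show ?thesis using fine_partition_Un partition_of_Un by blast
    qed
  qed
qed

lemma fine_partition_short:
  assumes t: "0 \<le> t" "t \<le> T" and e: "0 < e"
  obtains \<delta> where "0 < \<delta>"
    "\<And>a b. 0 \<le> a \<Longrightarrow> a < b \<Longrightarrow> b \<le> t \<Longrightarrow> b - a < \<delta> \<Longrightarrow> \<exists>Q. partition_of a b Q \<and> fine_partition e Q"
proof -
  define near where "near r d \<longleftrightarrow> 0 < d \<and> (\<forall>a b. 0 \<le> a \<longrightarrow> a < b \<longrightarrow> b \<le> T \<longrightarrow> r - d < a \<longrightarrow> b < r + d \<longrightarrow>
      (\<exists>Q. partition_of a b Q \<and> fine_partition e Q))" for r d
  have "\<forall>r\<in>{0..t}. \<exists>d. near r d"
  proof
    fix r assume "r \<in> {0..t}"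
    then obtain d where "0 < d" "\<And>a b. 0 \<le> a \<Longrightarrow> a < b \<Longrightarrow> b \<le> T \<Longrightarrow> r - d < a \<Longrightarrow> b < r + d \<Longrightarrow>
        \<exists>Q. partition_of a b Q \<and> fine_partition e Q"
      using fine_partition_near[of r e] t e by auto
    then show "\<exists>d. near r d" unfolding near_def by blast
  qed
  then obtain d where d: "\<And>r. r \<in> {0..t} \<Longrightarrow> near r (d r)" using bchoice by metis
  obtain \<delta> where \<delta>: "0 < \<delta>"
    and cover: "\<And>S. S \<subseteq> {0..t} \<Longrightarrow> diameter S < \<delta> \<Longrightarrow> \<exists>B\<in>(\<lambda>r. ball r (d r)) ` {0..t}. S \<subseteq> B"
  proof (rule Lebesgue_number_lemma[of "{0..t}" "(\<lambda>r. ball r (d r)) ` {0..t}"])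
    show "{0..t} \<subseteq> \<Union> ((\<lambda>r. ball r (d r)) ` {0..t})"
    proof
      fix r assume r: "r \<in> {0..t}"
      then have "r \<in> ball r (d r)" using d[OF r] unfolding near_def by simp
      then show "r \<in> \<Union> ((\<lambda>r. ball r (d r)) ` {0..t})" using r by blast
    qed
  qed (use t in auto)
  show ?thesis
  proof (rule that[OF \<delta>])
    fix a b assume ab: "0 \<le> a" "a < b" "b \<le> t" "b - a < \<delta>"
    then obtain r where r: "r \<in> {0..t}" "{a..b} \<subseteq> ball r (d r)" using cover[of "{a..b}"] by auto
    moreover have "a \<in> {a..b}" "b \<in> {a..b}" using ab by auto
    ultimately have "a \<in> ball r (d r)" "b \<in> ball r (d r)" by (auto simp del: mem_ball)
    then have "r - d r < a" "b < r + d r" by (auto simp: dist_real_def)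
    then show "\<exists>Q. partition_of a b Q \<and> fine_partition e Q" using d[OF r(1)] ab t unfolding near_def by auto
  qed
qed

lemma fine_partition_exists:
  assumes t: "0 \<le> t" "t \<le> T" and e: "0 < e"
  shows "\<exists>P. partition_of 0 t P \<and> fine_partition e P"
proof (cases "t = 0")
  case True
  then show ?thesis using fine_partition_singleton[of e 0] unfolding partition_of_def by auto
next
  case False
  then have t0: "0 < t" using t by auto
  obtain \<delta> where \<delta>: "0 < \<delta>"
    and short: "\<And>a b. 0 \<le> a \<Longrightarrow> a < b \<Longrightarrow> b \<le> t \<Longrightarrow> b - a < \<delta> \<Longrightarrow> \<exists>Q. partition_of a b Q \<and> fine_partition e Q"
    using fine_partition_short[OF t e] by blast
  obtain N :: nat where N: "t / \<delta> < N" using reals_Archimedean2 by blast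
  then have N0: "0 < N" using t0 \<delta> by (metis divide_pos_pos of_nat_0_less_iff order.strict_trans)
  define g where "g k = real k * t / real N" for k
  have step: "g k < g (Suc k)" "g (Suc k) - g k < \<delta>" for k
    using t0 N0 N \<delta> unfolding g_def by (auto simp: field_simps)
  have g_le: "g k \<le> t" if "k \<le> N" for k
  proof -
    have "real k * t \<le> t * real N" using that t0 by (simp add: mult.commute mult_left_mono)
    then show ?thesis unfolding g_def using N0 by (simp add: divide_le_eq)
  qed
  have "\<exists>P. partition_of 0 (g k) P \<and> fine_partition e P" if "k \<le> N" for k
    using that
  proof (induction k)
    case 0
    then show ?case using fine_partition_singleton[of e 0] unfolding g_def partition_of_def by auto
  next
    case (Suc k)
    then obtain P where P: "partition_of 0 (g k) P" "fine_partition e P" by auto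
    have "0 \<le> g k" "g (Suc k) \<le> t" using g_le[OF Suc.prems] t0 unfolding g_def by auto
    then obtain Q where Q: "partition_of (g k) (g (Suc k)) Q" "fine_partition e Q" using short step by blast
    show ?case using fine_partition_Un[OF P(1) Q(1) P(2) Q(2)] partition_of_Un[OF P(1) Q(1)] by blast
  qed
  moreover have "g N = t" unfolding g_def using N0 by simp
  ultimately show ?thesis by (metis order.refl)
qed

lemma eventually_fine_partition:
  assumes "0 \<le> t" "t \<le> T" "0 < e"
  shows "eventually (fine_partition e) (refinement_filter t)"
  unfolding eventually_refinement_filter[OF assms(1)]
  using fine_partition_exists[OF assms] fine_partition_refine by blast

end

section \<open>Paths controlled by a control\<close>

lemma norm_diff_right_limit_le:
  fixes f :: "real \<Rightarrow> 'a::real_normed_vector"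
  assumes "(f \<longlongrightarrow> L) (at_right r)" "r < b" "\<And>u. r < u \<Longrightarrow> u < b \<Longrightarrow> norm (g - f u) \<le> B"
  shows "norm (g - L) \<le> B"
proof (rule tendsto_upperbound)
  show "((\<lambda>u. norm (g - f u)) \<longlongrightarrow> norm (g - L)) (at_right r)"
    by (intro tendsto_intros assms(1))
  show "eventually (\<lambda>u. norm (g - f u) \<le> B) (at_right r)"
    unfolding eventually_at_right_field using assms by (intro exI[of _ b]) auto
qed simp

lemma norm_diff_left_limit_le:
  fixes f :: "real \<Rightarrow> 'a::real_normed_vector"
  assumes "(f \<longlongrightarrow> L) (at_left r)" "a < r" "\<And>u. a < u \<Longrightarrow> u < r \<Longrightarrow> norm (g - f u) \<le> B"
  shows "norm (g - L) \<le> B"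
proof (rule tendsto_upperbound)
  show "((\<lambda>u. norm (g - f u)) \<longlongrightarrow> norm (g - L)) (at_left r)"
    by (intro tendsto_intros assms(1))
  show "eventually (\<lambda>u. norm (g - f u) \<le> B) (at_left r)"
    unfolding eventually_at_left_field using assms by (intro exI[of _ a]) auto
qed simp

context control
begin

definition controlled :: "(real \<Rightarrow> 'a::real_normed_vector) \<Rightarrow> real \<Rightarrow> bool" where
  "controlled f c \<longleftrightarrow> (\<forall>u v. 0 \<le> u \<longrightarrow> u \<le> v \<longrightarrow> v \<le> T \<longrightarrow> norm (f v - f u) \<le> \<omega> u v powr c)"

lemma controlledD: "controlled f c \<Longrightarrow> 0 \<le> u \<Longrightarrow> u \<le> v \<Longrightarrow> v \<le> T \<Longrightarrow> norm (f v - f u) \<le> \<omega> u v powr c"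
  unfolding controlled_def by blast

lemma controlled_dist_le:
  assumes f: "controlled f c" "0 < c" and uv: "u \<in> {0..T}" "v \<in> {0..T}" "\<omega> (min u v) (max u v) \<le> m"
  shows "dist (f u) (f v) \<le> m powr c"
proof -
  have "dist (f u) (f v) = norm (f (max u v) - f (min u v))"
    by (cases "u \<le> v") (auto simp: dist_norm norm_minus_commute min_def max_def)
  also have "\<dots> \<le> \<omega> (min u v) (max u v) powr c" using uv by (intro controlledD[OF f(1)]) auto
  also have "\<dots> \<le> m powr c" using uv f(2) by (intro powr_mono2 control_nonneg) auto
  finally show ?thesis .
qed

lemma controlled_tendsto_right_lim:
  fixes f :: "real \<Rightarrow> 'a::banach"
  assumes f: "controlled f c" "0 < c" and r: "0 \<le> r" "r < T"
  shows "(f \<longlongrightarrow> right_lim f r) (at_right r)"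
proof -
  have "\<exists>L. (f \<longlongrightarrow> L) (at_right r)"
  proof (rule cauchy_dist_imp_tendsto)
    fix e :: real assume e: "0 < e"
    define m where "m = (e / 2) powr (1 / c)"
    have m: "0 < m" "m powr c = e / 2" unfolding m_def using e f(2) by (auto simp: powr_powr)
    obtain d where d: "0 < d" "\<And>u v. r < u \<Longrightarrow> u \<le> v \<Longrightarrow> v < r + d \<Longrightarrow> v \<le> T \<Longrightarrow> \<omega> u v \<le> m"
      using control_small_right[OF r(1) m(1)] by blast
    let ?near = "\<lambda>u. r < u \<and> u < r + min d (T - r)"
    show "\<exists>P. eventually P (at_right r) \<and> (\<forall>u v. P u \<and> P v \<longrightarrow> dist (f u) (f v) < e)"
    proof (intro exI[of _ ?near] conjI allI impI)
      show "eventually ?near (at_right r)"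
        unfolding eventually_at_right_field using d r by (intro exI[of _ "r + min d (T - r)"]) auto
      fix u v assume "?near u \<and> ?near v"
      then have "dist (f u) (f v) \<le> m powr c" using r by (intro controlled_dist_le[OF f] d(2)) auto
      then show "dist (f u) (f v) < e" using m e by simp
    qed
  qed simp
  then obtain L where L: "(f \<longlongrightarrow> L) (at_right r)" by blast
  then have "Lim (at_right r) f = L" by (intro tendsto_Lim) auto
  then show ?thesis unfolding right_lim_def using L by simp
qed

lemma controlled_tendsto_left_lim:
  fixes f :: "real \<Rightarrow> 'a::banach"
  assumes f: "controlled f c" "0 < c" and r: "0 < r" "r \<le> T"
  shows "(f \<longlongrightarrow> left_lim f r) (at_left r)"
proof -
  have "\<exists>L. (f \<longlongrightarrow> L) (at_left r)"
  proof (rule cauchy_dist_imp_tendsto)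
    fix e :: real assume e: "0 < e"
    define m where "m = (e / 2) powr (1 / c)"
    have m: "0 < m" "m powr c = e / 2" unfolding m_def using e f(2) by (auto simp: powr_powr)
    obtain d where d: "0 < d" "\<And>u v. r - d < u \<Longrightarrow> u \<le> v \<Longrightarrow> v < r \<Longrightarrow> 0 \<le> u \<Longrightarrow> \<omega> u v \<le> m"
      using control_small_left[OF r(2) m(1)] by blast
    let ?near = "\<lambda>u. r - min d r < u \<and> u < r"
    show "\<exists>P. eventually P (at_left r) \<and> (\<forall>u v. P u \<and> P v \<longrightarrow> dist (f u) (f v) < e)"
    proof (intro exI[of _ ?near] conjI allI impI)
      show "eventually ?near (at_left r)"
        unfolding eventually_at_left_field using d r by (intro exI[of _ "r - min d r"]) auto
      fix u v assume "?near u \<and> ?near v"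
      then have "dist (f u) (f v) \<le> m powr c" using r by (intro controlled_dist_le[OF f] d(2)) auto
      then show "dist (f u) (f v) < e" using m e by simp
    qed
  qed simp
  then obtain L where L: "(f \<longlongrightarrow> L) (at_left r)" by blast
  then have "Lim (at_left r) f = L" by (intro tendsto_Lim) auto
  then show ?thesis unfolding left_lim_def using L by simp
qed

lemma controlled_increments_after:
  fixes f :: "real \<Rightarrow> 'a::banach"
  assumes f: "controlled f c" "0 < c" and s: "0 \<le> s" "s < s'" "s' \<le> T"
    and small: "\<And>u v. s < u \<Longrightarrow> u \<le> v \<Longrightarrow> v \<le> s' \<Longrightarrow> \<omega> u v \<le> m"
  shows "norm (f s' - right_lim f s) \<le> m powr c" "norm (f s' - left_lim f s') \<le> m powr c"
proof -
  have bound: "norm (f s' - f u) \<le> m powr c" if "s < u" "u < s'" for u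
  proof -
    have "norm (f s' - f u) \<le> \<omega> u s' powr c" using that s by (intro controlledD[OF f(1)]) auto
    also have "\<dots> \<le> m powr c" using that s f(2) small[of u s'] by (intro powr_mono2 control_nonneg) auto
    finally show ?thesis .
  qed
  have "s < T" "0 < s'" using s by auto
  then show "norm (f s' - right_lim f s) \<le> m powr c" "norm (f s' - left_lim f s') \<le> m powr c"
    using norm_diff_right_limit_le[OF controlled_tendsto_right_lim[OF f s(1)] s(2) bound]
      norm_diff_left_limit_le[OF controlled_tendsto_left_lim[OF f _ s(3)] s(2) bound] by auto
qed

lemma controlled_increments_before:
  fixes f :: "real \<Rightarrow> 'a::banach"
  assumes f: "controlled f c" "0 < c" and s: "0 \<le> s" "s < s'" "s' \<le> T"
    and small: "\<And>u v. s \<le> u \<Longrightarrow> u \<le> v \<Longrightarrow> v < s' \<Longrightarrow> \<omega> u v \<le> m"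
  shows "norm (right_lim f s - f s) \<le> m powr c" "norm (left_lim f s' - f s) \<le> m powr c"
proof -
  have bound: "norm (f s - f u) \<le> m powr c" if "s < u" "u < s'" for u
  proof -
    have "norm (f s - f u) \<le> \<omega> s u powr c"
      using that s controlledD[OF f(1), of s u] by (simp add: norm_minus_commute)
    also have "\<dots> \<le> m powr c" using that s f(2) small[of s u] by (intro powr_mono2 control_nonneg) auto
    finally show ?thesis .
  qed
  have "s < T" "0 < s'" using s by auto
  then have "norm (f s - right_lim f s) \<le> m powr c" "norm (f s - left_lim f s') \<le> m powr c"
    using norm_diff_right_limit_le[OF controlled_tendsto_right_lim[OF f s(1)] s(2) bound]
      norm_diff_left_limit_le[OF controlled_tendsto_left_lim[OF f _ s(3)] s(2) bound] by auto
  then show "norm (right_lim f s - f s) \<le> m powr c" "norm (left_lim f s' - f s) \<le> m powr c"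
    by (simp_all add: norm_minus_commute)
qed

lemma controlled_jump_right_le:
  fixes f :: "real \<Rightarrow> 'a::banach"
  assumes "controlled f c" "0 < c" "0 \<le> s" "s < s'" "s' \<le> T"
  shows "norm (jump_right f s) \<le> \<omega> s s' powr c"
  unfolding jump_right_def
  by (rule controlled_increments_before(1)[OF assms]) (use assms in \<open>auto intro: control_mono\<close>)

lemma controlled_jump_left_le:
  fixes f :: "real \<Rightarrow> 'a::banach"
  assumes "controlled f c" "0 < c" "0 \<le> s" "s < s'" "s' \<le> T"
  shows "norm (jump_left f s') \<le> \<omega> s s' powr c"
  unfolding jump_left_def
  by (rule controlled_increments_after(2)[OF assms]) (use assms in \<open>auto intro: control_mono\<close>)

end

section \<open>Sewing along fine partitions\<close>

lemma powr_mult_le_split: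
  fixes a b m e \<alpha> \<beta> \<kappa> :: real
  assumes "0 \<le> a" "a \<le> m" "0 \<le> b" "b \<le> m" "b \<le> e" "0 \<le> \<alpha>" "0 \<le> \<kappa>" "\<kappa> \<le> \<beta>"
  shows "a powr \<alpha> * b powr \<beta> \<le> m powr (\<alpha> + \<beta> - \<kappa>) * e powr \<kappa>"
proof -
  have "a powr \<alpha> * b powr \<beta> = a powr \<alpha> * (b powr (\<beta> - \<kappa>) * b powr \<kappa>)"
    by (simp add: powr_add[symmetric])
  also have "\<dots> \<le> m powr \<alpha> * (m powr (\<beta> - \<kappa>) * e powr \<kappa>)"
    using assms by (intro mult_mono powr_mono2) auto
  also have "\<dots> = m powr (\<alpha> + \<beta> - \<kappa>) * e powr \<kappa>"
    by (simp add: mult.assoc[symmetric] powr_add[symmetric] add_diff_eq)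
  finally show ?thesis .
qed

lemma powr_small_coefficient:
  fixes K \<kappa> \<epsilon> :: real
  assumes "0 \<le> K" "0 < \<kappa>" "0 < \<epsilon>"
  obtains e where "0 < e" "K * e powr \<kappa> < \<epsilon>"
proof (cases "K = 0")
  case True
  then show ?thesis using assms that[of 1] by auto
next
  case False
  then have K: "0 < K" using assms by auto
  define e where "e = (\<epsilon> / (2 * K)) powr (1 / \<kappa>)"
  have "e powr \<kappa> = \<epsilon> / (2 * K)" unfolding e_def using assms K by (simp add: powr_powr)
  then have "K * e powr \<kappa> < \<epsilon>" using K assms by simp
  moreover have "0 < e" unfolding e_def using assms K by auto
  ultimately show ?thesis using that by blast
qed

context control
begin

lemma sum_two_cells_le:
  assumes P: "finite P" "P \<noteq> {}" "P \<subseteq> {0..T}"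
  shows "(\<Sum>s\<in>{s\<in>P. s < Max P \<and> next_point P s < Max P}.
      \<omega> s (next_point P s) + \<omega> (next_point P s) (next_point P (next_point P s))) \<le> 2 * \<omega> (Min P) (Max P)"
proof -
  let ?nx = "next_point P" and ?K = "{s\<in>P. s < Max P \<and> next_point P s < Max P}"
  have cell_nonneg: "0 \<le> \<omega> s (?nx s)" if "s \<in> P" "s < Max P" for s
    using that P next_point_in[OF P(1) that] next_point_gt[OF P(1) that] by (intro control_nonneg) auto
  have "(\<Sum>s\<in>?K. \<omega> s (?nx s)) \<le> partition_sum \<omega> P"
    unfolding partition_sum_def using P cell_nonneg by (intro sum_mono2) auto
  moreover have "(\<Sum>s\<in>?K. \<omega> (?nx s) (?nx (?nx s))) \<le> partition_sum \<omega> P"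
  proof -
    have "inj_on ?nx ?K"
      using bij_betw_imp_inj_on[OF next_point_bij[OF P(1)]] by (rule inj_on_subset) auto
    then have "(\<Sum>s\<in>?K. \<omega> (?nx s) (?nx (?nx s))) = (\<Sum>c\<in>?nx ` ?K. \<omega> c (?nx c))"
      by (simp add: sum.reindex)
    also have "\<dots> \<le> partition_sum \<omega> P"
      unfolding partition_sum_def using P cell_nonneg next_point_in[OF P(1)] by (intro sum_mono2) auto
    finally show ?thesis .
  qed
  ultimately show ?thesis using partition_sum_control_le[OF P] unfolding sum.distrib by linarith
qed

text \<open>Young's point-removal argument: at least n - 2 points are followed by two cells, these pairs
  of cells carry at most twice the total control, so one of them carries at most the average.\<close>

lemma exists_removable_point:
  assumes P: "finite P" "P \<subseteq> {0..T}" "3 \<le> card P"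
  obtains s where "s \<in> P" "s < Max P" "next_point P s < Max P"
    "\<omega> s (next_point P s) + \<omega> (next_point P s) (next_point P (next_point P s))
      \<le> 2 * \<omega> (Min P) (Max P) / real (card P - 2)"
proof -
  let ?K = "{s\<in>P. s < Max P \<and> next_point P s < Max P}"
  define m where "m s = \<omega> s (next_point P s) + \<omega> (next_point P s) (next_point P (next_point P s))" for s
  define B where "B = 2 * \<omega> (Min P) (Max P) / real (card P - 2)"
  have Pne: "P \<noteq> {}" using P by auto
  have cardK: "card P - 2 \<le> card ?K" by (rule card_points_before_last_cell[OF P(1,3)])
  then have "0 < card ?K" using P(3) by linarith
  then have K: "finite ?K" "?K \<noteq> {}" unfolding card_gt_0_iff by auto
  have "\<exists>s\<in>?K. m s \<le> B"
  proof (rule ccontr)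
    assume "\<not> ?thesis"
    then have "(\<Sum>s\<in>?K. B) < (\<Sum>s\<in>?K. m s)" using K by (intro sum_strict_mono) auto
    moreover have "0 \<le> B" unfolding B_def using P Min_in[OF P(1) Pne] Max_in[OF P(1) Pne]
      by (intro divide_nonneg_nonneg mult_nonneg_nonneg control_nonneg) auto
    then have "real (card P - 2) * B \<le> real (card ?K) * B" using cardK by (intro mult_right_mono) auto
    moreover have "real (card P - 2) * B = 2 * \<omega> (Min P) (Max P)" unfolding B_def using P by simp
    ultimately show False using sum_two_cells_le[OF P(1) Pne P(2)] unfolding m_def by simp
  qed
  then show ?thesis using that unfolding m_def B_def by blast
qed

end

text \<open>\<theta> > 1 makes the bound of the maximal inequality summable in the number of points, and
  the fineness e enters with the positive power \<kappa>.\<close>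

locale young_sewing = control +
  fixes \<alpha> \<beta> :: real
  assumes \<alpha>_pos: "0 < \<alpha>" and \<beta>_pos: "0 < \<beta>" and \<alpha>_\<beta>: "1 < \<alpha> + \<beta>"
begin

definition "\<kappa> = min (min \<alpha> \<beta>) ((\<alpha> + \<beta> - 1) / 2)"

definition "\<theta> = \<alpha> + \<beta> - \<kappa>"

lemma exponent_bounds: "0 < \<kappa>" "\<kappa> \<le> \<alpha>" "\<kappa> \<le> \<beta>" "1 < \<theta>"
proof -
  show "0 < \<kappa>" "\<kappa> \<le> \<alpha>" "\<kappa> \<le> \<beta>" using \<alpha>_pos \<beta>_pos \<alpha>_\<beta> unfolding \<kappa>_def by auto
  have "\<kappa> \<le> (\<alpha> + \<beta> - 1) / 2" unfolding \<kappa>_def by (rule min.cobounded2)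
  then show "1 < \<theta>" using \<alpha>_\<beta> unfolding \<theta>_def by (simp add: field_simps)
qed

definition young_bound :: "real \<Rightarrow> real \<Rightarrow> real" where
  "young_bound a b = a powr \<alpha> * b powr \<beta> + a powr \<beta> * b powr \<alpha>"

definition has_young_defect :: "(real \<Rightarrow> real \<Rightarrow> 'a::real_normed_vector) \<Rightarrow> bool" where
  "has_young_defect \<Xi> \<longleftrightarrow> (\<forall>v u w. 0 \<le> v \<longrightarrow> v \<le> u \<longrightarrow> u \<le> w \<longrightarrow> w \<le> T \<longrightarrow>
     norm (\<Xi> v w - \<Xi> v u - \<Xi> u w) \<le> young_bound (\<omega> v u) (\<omega> u w))"

lemma cross_powr_le:
  assumes "0 \<le> a" "a \<le> m" "0 \<le> b" "b \<le> m" "min a b \<le> e"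
  shows "a powr \<alpha> * b powr \<beta> \<le> m powr \<theta> * e powr \<kappa>"
proof (cases "b \<le> e")
  case True
  then show ?thesis unfolding \<theta>_def using assms exponent_bounds by (intro powr_mult_le_split) auto
next
  case False
  then have "b powr \<beta> * a powr \<alpha> \<le> m powr (\<beta> + \<alpha> - \<kappa>) * e powr \<kappa>"
    using assms exponent_bounds by (intro powr_mult_le_split) auto
  then show ?thesis unfolding \<theta>_def by (simp add: mult.commute add.commute)
qed

lemma young_bound_le:
  assumes "0 \<le> a" "a \<le> m" "0 \<le> b" "b \<le> m" "min a b \<le> e"
  shows "young_bound a b \<le> 2 * (m powr \<theta> * e powr \<kappa>)"
  using cross_powr_le[OF assms] cross_powr_le[of b m a e] assms
  unfolding young_bound_def by (simp add: min.commute mult.commute)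

definition zeta_partial :: "nat \<Rightarrow> real" where
  "zeta_partial n = (\<Sum>k<n. (1 / real (Suc k)) powr \<theta>)"

definition zeta :: real where
  "zeta = (\<Sum>k. (1 / real (Suc k)) powr \<theta>)"

lemma zeta_partial_le: "zeta_partial n \<le> zeta"
proof -
  have "summable (\<lambda>n. real n powr (- \<theta>))" using exponent_bounds by (subst summable_real_powr_iff) auto
  then have "summable (\<lambda>n. real (Suc n) powr (- \<theta>))" by (subst summable_Suc_iff)
  moreover have "(\<lambda>k. (1 / real (Suc k)) powr \<theta>) = (\<lambda>n. real (Suc n) powr (- \<theta>))"
    by (simp add: powr_minus_divide powr_divide)
  ultimately show ?thesis unfolding zeta_partial_def zeta_def by (intro sum_le_suminf) auto
qed

lemma zeta_nonneg: "0 \<le> zeta"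
  using zeta_partial_le[of 0] by (simp add: zeta_partial_def)

lemma removal_step_le:
  fixes \<Xi> :: "real \<Rightarrow> real \<Rightarrow> 'a::real_normed_vector"
  assumes \<Xi>: "has_young_defect \<Xi>" and P: "finite P" "P \<subseteq> {0..T}" "3 \<le> card P"
    and fine: "fine_interval e (Min P) (Max P)"
  obtains s where "s \<in> P" "s < Max P" "next_point P s < Max P"
    "norm (\<Xi> s (next_point P s) + \<Xi> (next_point P s) (next_point P (next_point P s))
        - \<Xi> s (next_point P (next_point P s)))
      \<le> 2 * (e powr \<kappa> * (2 * \<omega> (Min P) (Max P)) powr \<theta>) * (1 / real (card P - 2)) powr \<theta>"
proof -
  obtain s where s: "s \<in> P" "s < Max P" "next_point P s < Max P"
    and small: "\<omega> s (next_point P s) + \<omega> (next_point P s) (next_point P (next_point P s))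
      \<le> 2 * \<omega> (Min P) (Max P) / real (card P - 2)"
    using exists_removable_point[OF P] by blast
  define c where "c = next_point P s"
  define w where "w = next_point P c"
  have c: "c \<in> P" "s < c" using next_point_in[OF P(1) s(1,2)] next_point_gt[OF P(1) s(1,2)] c_def by auto
  have w: "w \<in> P" "c < w" using next_point_in[OF P(1) c(1)] next_point_gt[OF P(1) c(1)] s(3) c_def w_def by auto
  have bounds: "0 \<le> s" "w \<le> T" "Min P \<le> s" "w \<le> Max P" using s w P by auto
  have cells: "0 \<le> \<omega> s c" "0 \<le> \<omega> c w" using bounds c w by (auto intro: control_nonneg)
  have "Min P \<in> P" "Max P \<in> P" using P(1) s(1) by (auto intro!: Min_in Max_in)
  then have W: "0 \<le> \<omega> (Min P) (Max P)" using bounds c w P(2) by (intro control_nonneg) auto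
  have "min (\<omega> s c) (\<omega> c w) \<le> e"
    using fine_interval_min_le[OF fine] bounds c w s(3) unfolding c_def by auto
  then have "young_bound (\<omega> s c) (\<omega> c w) \<le> 2 * ((\<omega> s c + \<omega> c w) powr \<theta> * e powr \<kappa>)"
    using cells by (intro young_bound_le) auto
  moreover have "(\<omega> s c + \<omega> c w) powr \<theta>
      \<le> (2 * \<omega> (Min P) (Max P)) powr \<theta> * (1 / real (card P - 2)) powr \<theta>"
  proof -
    have "(\<omega> s c + \<omega> c w) powr \<theta> \<le> (2 * \<omega> (Min P) (Max P) * (1 / real (card P - 2))) powr \<theta>"
      using small cells exponent_bounds unfolding c_def w_def by (intro powr_mono2) auto
    also have "\<dots> = (2 * \<omega> (Min P) (Max P)) powr \<theta> * (1 / real (card P - 2)) powr \<theta>"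
      using powr_mult[of "2 * \<omega> (Min P) (Max P)" "1 / real (card P - 2)" \<theta>] W by simp
    finally show ?thesis .
  qed
  then have "2 * ((\<omega> s c + \<omega> c w) powr \<theta> * e powr \<kappa>)
      \<le> 2 * ((2 * \<omega> (Min P) (Max P)) powr \<theta> * (1 / real (card P - 2)) powr \<theta> * e powr \<kappa>)"
    by (intro mult_left_mono mult_right_mono) auto
  ultimately have "young_bound (\<omega> s c) (\<omega> c w)
      \<le> 2 * (e powr \<kappa> * (2 * \<omega> (Min P) (Max P)) powr \<theta>) * (1 / real (card P - 2)) powr \<theta>"
    by (simp add: mult_ac)
  moreover have "norm (\<Xi> s c + \<Xi> c w - \<Xi> s w) = norm (\<Xi> s w - \<Xi> s c - \<Xi> c w)"
    using norm_minus_cancel[of "\<Xi> s w - \<Xi> s c - \<Xi> c w"] by (simp add: algebra_simps)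
  moreover have "norm (\<Xi> s w - \<Xi> s c - \<Xi> c w) \<le> young_bound (\<omega> s c) (\<omega> c w)"
    using \<Xi> bounds c w unfolding has_young_defect_def by auto
  ultimately show ?thesis using that s unfolding c_def w_def by fastforce
qed

lemma partition_sum_young_le:
  fixes \<Xi> :: "real \<Rightarrow> real \<Rightarrow> 'a::real_normed_vector"
  assumes \<Xi>: "has_young_defect \<Xi>" and e: "0 \<le> e"
  shows "finite P \<Longrightarrow> P \<noteq> {} \<Longrightarrow> P \<subseteq> {0..T} \<Longrightarrow> Min P < Max P \<Longrightarrow> fine_interval e (Min P) (Max P) \<Longrightarrow>
    norm (partition_sum \<Xi> P - \<Xi> (Min P) (Max P))
      \<le> 2 * (e powr \<kappa> * (2 * \<omega> (Min P) (Max P)) powr \<theta>) * zeta_partial (card P - 2)"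
proof (induction "card P" arbitrary: P rule: less_induct)
  case less
  let ?a = "Min P" and ?b = "Max P"
  let ?C = "2 * (e powr \<kappa> * (2 * \<omega> ?a ?b) powr \<theta>)"
  show ?case
  proof (cases "card P \<le> 2")
    case True
    then show ?thesis using partition_sum_card_le_two[OF less.prems(1,2,4)]
      by (simp add: zeta_partial_def sum_nonneg)
  next
    case False
    then have "3 \<le> card P" by simp
    then obtain s where s: "s \<in> P" "s < ?b" "next_point P s < ?b"
      and step: "norm (\<Xi> s (next_point P s) + \<Xi> (next_point P s) (next_point P (next_point P s))
          - \<Xi> s (next_point P (next_point P s))) \<le> ?C * (1 / real (card P - 2)) powr \<theta>"
      using removal_step_le[OF \<Xi> less.prems(1,3) _ less.prems(5)] by blast
    define c where "c = next_point P s"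
    define P' where "P' = P - {c}"
    have c: "c \<in> P" "s < c" "c < ?b" using next_point_in[OF less.prems(1) s(1,2)] next_point_gt[OF less.prems(1) s(1,2)] s(3)
      unfolding c_def by auto
    have "?a \<le> s" "?a \<in> P" "?b \<in> P" using s less.prems(1,2) by auto
    then have P': "finite P'" "P' \<noteq> {}" "P' \<subseteq> {0..T}" "Min P' = ?a" "Max P' = ?b" "card P' = card P - 1"
      using less.prems(1,3) c unfolding P'_def by (auto intro!: Min_eqI Max_eqI)
    have IH: "norm (partition_sum \<Xi> P' - \<Xi> ?a ?b) \<le> ?C * zeta_partial (card P' - 2)"
      using less.hyps[of P'] P' less.prems(4,5) False by auto
    have zeta: "zeta_partial (card P - 2) = zeta_partial (card P' - 2) + (1 / real (card P - 2)) powr \<theta>"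
    proof -
      have "card P - 2 = Suc (card P' - 2)" using P'(6) False by auto
      then show ?thesis unfolding zeta_partial_def by simp
    qed
    have "partition_sum \<Xi> P = partition_sum \<Xi> P'
        + (\<Xi> s c + \<Xi> c (next_point P c) - \<Xi> s (next_point P c))"
      unfolding P'_def c_def by (rule partition_sum_remove_next[OF less.prems(1) s])
    then have "partition_sum \<Xi> P - \<Xi> ?a ?b = (partition_sum \<Xi> P' - \<Xi> ?a ?b)
        + (\<Xi> s c + \<Xi> c (next_point P c) - \<Xi> s (next_point P c))" by simp
    then have "norm (partition_sum \<Xi> P - \<Xi> ?a ?b) \<le> norm (partition_sum \<Xi> P' - \<Xi> ?a ?b)
        + norm (\<Xi> s c + \<Xi> c (next_point P c) - \<Xi> s (next_point P c))"
      by (simp only: norm_triangle_ineq)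
    also have "\<dots> \<le> ?C * zeta_partial (card P' - 2) + ?C * (1 / real (card P - 2)) powr \<theta>"
      using IH step unfolding c_def by (rule add_mono)
    finally show ?thesis using zeta by (simp add: distrib_left)
  qed
qed

lemma partition_sum_young_zeta_le:
  fixes \<Xi> :: "real \<Rightarrow> real \<Rightarrow> 'a::real_normed_vector"
  assumes \<Xi>: "has_young_defect \<Xi>" and e: "0 \<le> e"
    and Q: "finite Q" "Q \<noteq> {}" "Q \<subseteq> {0..T}" "Min Q < Max Q" "fine_interval e (Min Q) (Max Q)"
  shows "norm (partition_sum \<Xi> Q - \<Xi> (Min Q) (Max Q))
    \<le> 2 * 2 powr \<theta> * zeta * e powr \<kappa> * \<omega> (Min Q) (Max Q) powr \<theta>"
proof -
  have "0 \<le> \<omega> (Min Q) (Max Q)" using Q by (intro control_nonneg) auto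
  then have "2 * (e powr \<kappa> * (2 * \<omega> (Min Q) (Max Q)) powr \<theta>) * zeta_partial (card Q - 2)
      \<le> 2 * (e powr \<kappa> * (2 * \<omega> (Min Q) (Max Q)) powr \<theta>) * zeta"
    by (intro mult_left_mono zeta_partial_le) auto
  also have "\<dots> = 2 * 2 powr \<theta> * zeta * e powr \<kappa> * \<omega> (Min Q) (Max Q) powr \<theta>"
    using \<open>0 \<le> \<omega> (Min Q) (Max Q)\<close> by (simp add: powr_mult mult_ac)
  finally show ?thesis using partition_sum_young_le[OF \<Xi> e Q] by linarith
qed

lemma sewing_refinement_le:
  fixes \<Xi> :: "real \<Rightarrow> real \<Rightarrow> 'a::real_normed_vector"
  assumes \<Xi>: "has_young_defect \<Xi>" and t: "t \<le> T" and e: "0 \<le> e"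
    and P0: "partition_of 0 t P0" "fine_partition e P0" and P: "partition_of 0 t P" "P0 \<subseteq> P"
  shows "norm (partition_sum \<Xi> P - partition_sum \<Xi> P0) \<le> 2 * 2 powr \<theta> * zeta * \<omega> 0 T powr \<theta> * e powr \<kappa>"
proof -
  note m0 = partition_ofD[OF P0(1)] and m = partition_ofD[OF P(1)]
  let ?C = "2 * 2 powr \<theta> * zeta * e powr \<kappa>" and ?I = "{s\<in>P0. s < Max P0}"
  have P0T: "P0 \<subseteq> {0..T}" and PT: "P \<subseteq> {0..T}" using P0 P t unfolding partition_of_def by auto
  have cell: "norm (partition_sum \<Xi> (P \<inter> {s..next_point P0 s}) - \<Xi> s (next_point P0 s))
      \<le> ?C * \<omega> s (next_point P0 s) powr \<theta>" if s: "s \<in> ?I" for s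
  proof -
    let ?s' = "next_point P0 s" and ?Q = "P \<inter> {s..next_point P0 s}"
    have s': "?s' \<in> P0" "s < ?s'" using next_point_in[OF m0(1)] next_point_gt[OF m0(1)] s by auto
    have Q: "finite ?Q" "?Q \<noteq> {}" "?Q \<subseteq> {0..T}" using m(1) s s' P(2) PT by auto
    have "Min ?Q = s" "Max ?Q = ?s'" using m s s' P(2) by (auto intro!: Min_eqI Max_eqI)
    moreover have "fine_interval e s ?s'" using P0(2) s unfolding fine_partition_def by auto
    ultimately show ?thesis using partition_sum_young_zeta_le[OF \<Xi> e Q] s' by simp
  qed
  have "partition_sum \<Xi> P = (\<Sum>s\<in>?I. partition_sum \<Xi> (P \<inter> {s..next_point P0 s}))"
    using partition_sum_refinement[OF m(1) P(2) m0(2)] P(1) m0 unfolding partition_of_def by simp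
  then have "norm (partition_sum \<Xi> P - partition_sum \<Xi> P0)
      = norm (\<Sum>s\<in>?I. partition_sum \<Xi> (P \<inter> {s..next_point P0 s}) - \<Xi> s (next_point P0 s))"
    by (simp add: partition_sum_def sum_subtractf)
  also have "\<dots> \<le> (\<Sum>s\<in>?I. ?C * \<omega> s (next_point P0 s) powr \<theta>)"
    using cell by (intro order_trans[OF norm_sum] sum_mono) auto
  also have "\<dots> = ?C * partition_sum (\<lambda>a b. \<omega> a b powr \<theta>) P0"
    unfolding partition_sum_def by (simp add: sum_distrib_left)
  also have "\<dots> \<le> ?C * \<omega> 0 T powr \<theta>"
    using partition_sum_control_powr_le[OF m0(1,2) P0T] exponent_bounds zeta_nonneg by (intro mult_left_mono) auto
  finally show ?thesis by (simp add: mult_ac)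
qed

lemma sewing_RRS_limit:
  fixes \<Xi> :: "real \<Rightarrow> real \<Rightarrow> 'a::banach"
  assumes \<Xi>: "has_young_defect \<Xi>" and t: "0 \<le> t" "t \<le> T"
  shows "\<exists>I. RRS_has_limit (partition_sum \<Xi>) t I"
proof (rule RRS_has_limit_CauchyI[OF t(1)])
  fix \<epsilon> :: real assume "0 < \<epsilon>"
  moreover have "0 \<le> 2 * 2 powr \<theta> * zeta * \<omega> 0 T powr \<theta>" using zeta_nonneg by simp
  ultimately obtain e where e: "0 < e" "2 * 2 powr \<theta> * zeta * \<omega> 0 T powr \<theta> * e powr \<kappa> < \<epsilon>"
    using powr_small_coefficient exponent_bounds(1) by metis
  obtain P0 where P0: "partition_of 0 t P0" "fine_partition e P0" using fine_partition_exists[OF t e(1)] by blast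
  show "\<exists>P0. partition_of 0 t P0 \<and>
      (\<forall>P. partition_of 0 t P \<and> P0 \<subseteq> P \<longrightarrow> norm (partition_sum \<Xi> P - partition_sum \<Xi> P0) \<le> \<epsilon>)"
    using sewing_refinement_le[OF \<Xi> t(2) _ P0] e P0(1) by (meson less_imp_le order_trans)
qed

end

section \<open>Forward integral and covariation\<close>

lemma norm_blinfun_apply_le:
  assumes "norm A \<le> a" "norm v \<le> b"
  shows "norm (blinfun_apply A v) \<le> a * b"
proof -
  have "0 \<le> a" using assms(1) norm_ge_zero[of A] by linarith
  then have "norm A * norm v \<le> a * b" using assms by (intro mult_mono) auto
  then show ?thesis using norm_blinfun[of A v] by linarith
qed

lemma norm_add3_diff_le: "norm (a + b + c - d) \<le> norm a + norm b + norm c + norm (d::'a::real_normed_vector)"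
  using norm_triangle_ineq4[of "a + b + c" d] norm_triangle_ineq[of "a + b" c] norm_triangle_ineq[of a b]
  by linarith

locale young_pair = young_sewing +
  fixes x :: "real \<Rightarrow> 'v::banach \<Rightarrow>\<^sub>L 'w::banach" and y :: "real \<Rightarrow> 'v"
  assumes x_controlled: "controlled x \<alpha>" and y_controlled: "controlled y \<beta>"
begin

lemma fwd_increment_has_young_defect: "has_young_defect (\<lambda>a b. blinfun_apply (x a) (y b - y a))"
  unfolding has_young_defect_def
proof (intro allI impI)
  fix v u w assume vuw: "0 \<le> v" "v \<le> u" "u \<le> w" "w \<le> T"
  have "blinfun_apply (x v) (y w - y v) - blinfun_apply (x v) (y u - y v) - blinfun_apply (x u) (y w - y u)
      = - blinfun_apply (x u - x v) (y w - y u)"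
    by (simp add: blinfun.diff_left blinfun.diff_right algebra_simps)
  moreover have "norm (blinfun_apply (x u - x v) (y w - y u)) \<le> \<omega> v u powr \<alpha> * \<omega> u w powr \<beta>"
    using vuw by (intro norm_blinfun_apply_le controlledD[OF x_controlled] controlledD[OF y_controlled]) auto
  ultimately show "norm (blinfun_apply (x v) (y w - y v) - blinfun_apply (x v) (y u - y v)
      - blinfun_apply (x u) (y w - y u)) \<le> young_bound (\<omega> v u) (\<omega> u w)"
    unfolding young_bound_def by (simp add: add_increasing2)
qed

lemma fwd_young_exists:
  assumes "0 \<le> t" "t \<le> T"
  shows "\<exists>I. has_fwd_young x y t I"
  using sewing_RRS_limit[OF fwd_increment_has_young_defect assms]
  unfolding has_fwd_young_iff_tendsto[OF assms(1)] RRS_has_limit_iff_tendsto[OF assms(1)] .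

definition covariation :: "real \<Rightarrow> real \<Rightarrow> 'w" where
  "covariation a b = blinfun_apply (x b - x a) (y b - y a)"

definition left_jump_prod :: "real \<Rightarrow> 'w" where
  "left_jump_prod r = blinfun_apply (jump_left x r) (jump_left y r)"

definition right_jump_prod :: "real \<Rightarrow> 'w" where
  "right_jump_prod r = blinfun_apply (jump_right x r) (jump_right y r)"

lemma bwd_eq_fwd_plus_covariation:
  "partition_sum (\<lambda>a b. blinfun_apply (x b) (y b - y a)) P
    = partition_sum (\<lambda>a b. blinfun_apply (x a) (y b - y a)) P + partition_sum covariation P"
  unfolding covariation_def partition_sum_add[symmetric] by (simp add: blinfun.diff_left)

lemma norm_blinfun_cross_le:
  assumes "norm A \<le> a powr \<alpha>" "norm v \<le> b powr \<beta>" "0 \<le> a" "a \<le> m" "0 \<le> b" "b \<le> m" "min a b \<le> e"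
  shows "norm (blinfun_apply A v) \<le> m powr \<theta> * e powr \<kappa>"
  using norm_blinfun_apply_le[OF assms(1,2)] cross_powr_le[OF assms(3-7)] by linarith

lemma covariation_jumps_after:
  assumes s: "0 \<le> s" "s < s'" "s' \<le> T" and e: "0 \<le> e"
    and small: "\<And>u v. s < u \<Longrightarrow> u \<le> v \<Longrightarrow> v \<le> s' \<Longrightarrow> \<omega> u v \<le> e"
  shows "norm (covariation s s' - right_jump_prod s - left_jump_prod s') \<le> 4 * (\<omega> s s' powr \<theta> * e powr \<kappa>)"
proof -
  let ?m = "\<omega> s s'" let ?\<mu> = "min e ?m" let ?K = "?m powr \<theta> * e powr \<kappa>"
  have m: "0 \<le> ?m" "0 \<le> ?\<mu>" "?\<mu> \<le> ?m" "min ?m ?\<mu> \<le> e" "min ?\<mu> ?m \<le> e" "min ?\<mu> ?\<mu> \<le> e"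
    using s e by (auto intro: control_nonneg)
  have inner: "\<omega> u v \<le> ?\<mu>" if "s < u" "u \<le> v" "v \<le> s'" for u v
    using small[OF that] control_mono[of s u v s'] that s by auto
  define X where "X = jump_right x s"
  define A where "A = x s' - right_lim x s"
  define Y where "Y = jump_right y s"
  define B where "B = y s' - right_lim y s"
  have X: "norm X \<le> ?m powr \<alpha>" and Y: "norm Y \<le> ?m powr \<beta>"
    unfolding X_def Y_def using s \<alpha>_pos \<beta>_pos
    by (auto intro: controlled_jump_right_le x_controlled y_controlled)
  have A: "norm A \<le> ?\<mu> powr \<alpha>" and B: "norm B \<le> ?\<mu> powr \<beta>"
    and Dx: "norm (jump_left x s') \<le> ?\<mu> powr \<alpha>" and Dy: "norm (jump_left y s') \<le> ?\<mu> powr \<beta>"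
    unfolding A_def B_def jump_left_def
    using controlled_increments_after[OF x_controlled \<alpha>_pos s inner]
      controlled_increments_after[OF y_controlled \<beta>_pos s inner] by auto
  have eq: "covariation s s' - right_jump_prod s - left_jump_prod s'
      = blinfun_apply X B + blinfun_apply A Y + blinfun_apply A B
        - blinfun_apply (jump_left x s') (jump_left y s')"
  proof -
    have "x s' - x s = X + A" "y s' - y s = Y + B" unfolding X_def A_def Y_def B_def jump_right_def by simp_all
    then show ?thesis unfolding covariation_def right_jump_prod_def left_jump_prod_def X_def[symmetric] Y_def[symmetric]
      by (simp add: blinfun.add_left blinfun.add_right)
  qed
  show ?thesis
    unfolding eq using norm_add3_diff_le norm_blinfun_cross_le[OF X B] norm_blinfun_cross_le[OF A Y]
      norm_blinfun_cross_le[OF A B] norm_blinfun_cross_le[OF Dx Dy] m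
    by (smt (verit))
qed

lemma covariation_jumps_before:
  assumes s: "0 \<le> s" "s < s'" "s' \<le> T" and e: "0 \<le> e"
    and small: "\<And>u v. s \<le> u \<Longrightarrow> u \<le> v \<Longrightarrow> v < s' \<Longrightarrow> \<omega> u v \<le> e"
  shows "norm (covariation s s' - right_jump_prod s - left_jump_prod s') \<le> 4 * (\<omega> s s' powr \<theta> * e powr \<kappa>)"
proof -
  let ?m = "\<omega> s s'" let ?\<mu> = "min e ?m" let ?K = "?m powr \<theta> * e powr \<kappa>"
  have m: "0 \<le> ?m" "0 \<le> ?\<mu>" "?\<mu> \<le> ?m" "min ?m ?\<mu> \<le> e" "min ?\<mu> ?m \<le> e" "min ?\<mu> ?\<mu> \<le> e"
    using s e by (auto intro: control_nonneg)
  have inner: "\<omega> u v \<le> ?\<mu>" if "s \<le> u" "u \<le> v" "v < s'" for u v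
    using small[OF that] control_mono[of s u v s'] that s by auto
  define X' where "X' = left_lim x s' - x s"
  define Y' where "Y' = left_lim y s' - y s"
  define Dx where "Dx = jump_left x s'"
  define Dy where "Dy = jump_left y s'"
  have Dx: "norm Dx \<le> ?m powr \<alpha>" and Dy: "norm Dy \<le> ?m powr \<beta>"
    unfolding Dx_def Dy_def using s \<alpha>_pos \<beta>_pos
    by (auto intro: controlled_jump_left_le x_controlled y_controlled)
  have X: "norm (jump_right x s) \<le> ?\<mu> powr \<alpha>" and Y: "norm (jump_right y s) \<le> ?\<mu> powr \<beta>"
    and X': "norm X' \<le> ?\<mu> powr \<alpha>" and Y': "norm Y' \<le> ?\<mu> powr \<beta>"
    unfolding X'_def Y'_def jump_right_def
    using controlled_increments_before[OF x_controlled \<alpha>_pos s inner]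
      controlled_increments_before[OF y_controlled \<beta>_pos s inner] by auto
  have eq: "covariation s s' - right_jump_prod s - left_jump_prod s'
      = blinfun_apply X' Y' + blinfun_apply X' Dy + blinfun_apply Dx Y'
        - blinfun_apply (jump_right x s) (jump_right y s)"
  proof -
    have "x s' - x s = X' + Dx" "y s' - y s = Y' + Dy" unfolding X'_def Dx_def Y'_def Dy_def jump_left_def by simp_all
    then show ?thesis unfolding covariation_def right_jump_prod_def left_jump_prod_def Dx_def[symmetric] Dy_def[symmetric]
      by (simp add: blinfun.add_left blinfun.add_right)
  qed
  show ?thesis
    unfolding eq using norm_add3_diff_le norm_blinfun_cross_le[OF X' Y'] norm_blinfun_cross_le[OF X' Dy]
      norm_blinfun_cross_le[OF Dx Y'] norm_blinfun_cross_le[OF X Y] m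
    by (smt (verit))
qed

lemma covariation_jumps_le:
  assumes "0 \<le> s" "s < s'" "s' \<le> T" "0 \<le> e" "fine_interval e s s'"
  shows "norm (covariation s s' - right_jump_prod s - left_jump_prod s') \<le> 4 * (\<omega> s s' powr \<theta> * e powr \<kappa>)"
  using assms(5) unfolding fine_interval_def
  by (elim disjE; intro covariation_jumps_after covariation_jumps_before) (use assms in auto)

lemma left_jump_prod_le:
  assumes "0 \<le> s" "s < r" "r \<le> T"
  shows "norm (left_jump_prod r) \<le> \<omega> s r powr (\<alpha> + \<beta>)"
  unfolding left_jump_prod_def powr_add using assms \<alpha>_pos \<beta>_pos
  by (intro norm_blinfun_apply_le controlled_jump_left_le x_controlled y_controlled)

lemma right_jump_prod_le:
  assumes "0 \<le> s" "s < r" "r \<le> T"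
  shows "norm (right_jump_prod s) \<le> \<omega> s r powr (\<alpha> + \<beta>)"
  unfolding right_jump_prod_def powr_add using assms \<alpha>_pos \<beta>_pos
  by (intro norm_blinfun_apply_le controlled_jump_right_le x_controlled y_controlled)

lemma left_jump_prod_summable:
  assumes "t \<le> T"
  shows "left_jump_prod summable_on {0<..t}"
proof (rule abs_summable_summable, rule nonneg_bdd_above_summable_on)
  show "bdd_above (sum (\<lambda>r. norm (left_jump_prod r)) ` {F. F \<subseteq> {0<..t} \<and> finite F})"
  proof (rule bdd_aboveI)
    fix z assume "z \<in> sum (\<lambda>r. norm (left_jump_prod r)) ` {F. F \<subseteq> {0<..t} \<and> finite F}"
    then obtain F where F: "F \<subseteq> {0<..t}" "finite F" "z = sum (\<lambda>r. norm (left_jump_prod r)) F" by auto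
    define P where "P = insert 0 F"
    have "Min P = 0" unfolding P_def using F by (intro Min_eqI) auto
    then have P: "finite P" "P \<noteq> {}" "P \<subseteq> {0..T}" "P - {Min P} = F"
      using F assms T_nonneg unfolding P_def by auto
    have "z = (\<Sum>s\<in>{s\<in>P. s < Max P}. norm (left_jump_prod (next_point P s)))"
      using sum.reindex_bij_betw[OF next_point_bij[OF P(1)], of "\<lambda>r. norm (left_jump_prod r)"] P(4) F(3) by simp
    also have "\<dots> \<le> partition_sum (\<lambda>a b. \<omega> a b powr (\<alpha> + \<beta>)) P"
      unfolding partition_sum_def
    proof (rule sum_mono)
      fix s assume s: "s \<in> {s\<in>P. s < Max P}"
      then have "next_point P s \<in> P" "s < next_point P s"
        using next_point_in[OF P(1)] next_point_gt[OF P(1)] by auto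
      then show "norm (left_jump_prod (next_point P s)) \<le> \<omega> s (next_point P s) powr (\<alpha> + \<beta>)"
        using s P(3) by (intro left_jump_prod_le) auto
    qed
    also have "\<dots> \<le> \<omega> 0 T powr (\<alpha> + \<beta>)" using partition_sum_control_powr_le[OF P(1-3)] \<alpha>_\<beta> by simp
    finally show "z \<le> \<omega> 0 T powr (\<alpha> + \<beta>)" .
  qed
qed simp

lemma right_jump_prod_summable:
  assumes "0 \<le> t" "t \<le> T"
  shows "right_jump_prod summable_on {0..<t}"
proof (rule abs_summable_summable, rule nonneg_bdd_above_summable_on)
  show "bdd_above (sum (\<lambda>r. norm (right_jump_prod r)) ` {F. F \<subseteq> {0..<t} \<and> finite F})"
  proof (rule bdd_aboveI)
    fix z assume "z \<in> sum (\<lambda>r. norm (right_jump_prod r)) ` {F. F \<subseteq> {0..<t} \<and> finite F}"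
    then obtain F where F: "F \<subseteq> {0..<t}" "finite F" "z = sum (\<lambda>r. norm (right_jump_prod r)) F" by auto
    define P where "P = insert t F"
    have "Max P = t" unfolding P_def using F by (intro Max_eqI) auto
    then have P: "finite P" "P \<noteq> {}" "P \<subseteq> {0..T}" "{s\<in>P. s < Max P} = F"
      using F assms unfolding P_def by auto
    have "z = (\<Sum>s\<in>{s\<in>P. s < Max P}. norm (right_jump_prod s))" using P(4) F(3) by simp
    also have "\<dots> \<le> partition_sum (\<lambda>a b. \<omega> a b powr (\<alpha> + \<beta>)) P"
      unfolding partition_sum_def
    proof (rule sum_mono)
      fix s assume s: "s \<in> {s\<in>P. s < Max P}"
      then have "next_point P s \<in> P" "s < next_point P s"
        using next_point_in[OF P(1)] next_point_gt[OF P(1)] by auto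
      then show "norm (right_jump_prod s) \<le> \<omega> s (next_point P s) powr (\<alpha> + \<beta>)"
        using s P(3) by (intro right_jump_prod_le) auto
    qed
    also have "\<dots> \<le> \<omega> 0 T powr (\<alpha> + \<beta>)" using partition_sum_control_powr_le[OF P(1-3)] \<alpha>_\<beta> by simp
    finally show "z \<le> \<omega> 0 T powr (\<alpha> + \<beta>)" .
  qed
qed simp

lemma partition_sum_jumps:
  assumes P: "partition_of 0 t P"
  shows "partition_sum (\<lambda>a b. right_jump_prod a + left_jump_prod b) P
    = sum right_jump_prod (P \<inter> {0..<t}) + sum left_jump_prod (P \<inter> {0<..t})"
proof -
  note m = partition_ofD[OF P]
  have "{s\<in>P. s < Max P} = P \<inter> {0..<t}" "P - {Min P} = P \<inter> {0<..t}"
    using P m unfolding partition_of_def by auto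
  moreover have "(\<Sum>s\<in>{s\<in>P. s < Max P}. left_jump_prod (next_point P s)) = sum left_jump_prod (P - {Min P})"
    by (rule sum.reindex_bij_betw[OF next_point_bij[OF m(1)]])
  ultimately show ?thesis unfolding partition_sum_def by (simp add: sum.distrib)
qed

lemma covariation_minus_jumps_le:
  assumes P: "partition_of 0 t P" "fine_partition e P" and t: "t \<le> T" and e: "0 \<le> e"
  shows "norm (partition_sum covariation P - partition_sum (\<lambda>a b. right_jump_prod a + left_jump_prod b) P)
    \<le> 4 * \<omega> 0 T powr \<theta> * e powr \<kappa>"
proof -
  note m = partition_ofD[OF P(1)]
  have PT: "P \<subseteq> {0..T}" using P(1) t unfolding partition_of_def by auto
  have "norm (partition_sum covariation P - partition_sum (\<lambda>a b. right_jump_prod a + left_jump_prod b) P)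
      \<le> partition_sum (\<lambda>a b. norm (covariation a b - right_jump_prod a - left_jump_prod b)) P"
    using norm_partition_sum_le[of "\<lambda>a b. covariation a b - right_jump_prod a - left_jump_prod b" P]
    unfolding partition_sum_diff[symmetric] by (simp add: algebra_simps)
  also have "\<dots> \<le> partition_sum (\<lambda>a b. 4 * e powr \<kappa> * \<omega> a b powr \<theta>) P"
  proof (rule partition_sum_mono)
    fix s assume s: "s \<in> P" "s < Max P"
    have "fine_interval e s (next_point P s)" using P(2) s unfolding fine_partition_def by auto
    moreover have "0 \<le> s" "s < next_point P s" "next_point P s \<le> T"
      using s PT next_point_in[OF m(1) s] next_point_gt[OF m(1) s] by auto
    ultimately show "norm (covariation s (next_point P s) - right_jump_prod s - left_jump_prod (next_point P s))
        \<le> 4 * e powr \<kappa> * \<omega> s (next_point P s) powr \<theta>"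
      using covariation_jumps_le[of s "next_point P s" e] e by (simp add: mult_ac)
  qed
  also have "\<dots> = 4 * e powr \<kappa> * partition_sum (\<lambda>a b. \<omega> a b powr \<theta>) P"
    by (rule partition_sum_mult_left)
  also have "\<dots> \<le> 4 * e powr \<kappa> * \<omega> 0 T powr \<theta>"
    using partition_sum_control_powr_le[OF m(1,2) PT] exponent_bounds by (intro mult_left_mono) auto
  finally show ?thesis by (simp add: mult_ac)
qed

lemma covariation_tendsto:
  assumes t: "0 \<le> t" "t \<le> T"
  shows "(partition_sum covariation \<longlongrightarrow> infsum left_jump_prod {0<..t} + infsum right_jump_prod {0..<t})
    (refinement_filter t)"
proof -
  let ?J = "partition_sum (\<lambda>a b. right_jump_prod a + left_jump_prod b)"
  let ?L = "infsum left_jump_prod {0<..t}" and ?R = "infsum right_jump_prod {0..<t}"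
  have sub: "{0<..t} \<subseteq> {0..t}" "{0..<t} \<subseteq> {0..t}" by auto
  have "(sum left_jump_prod \<longlongrightarrow> ?L) (finite_subsets_at_top {0<..t})"
    using left_jump_prod_summable[OF t(2)] by (simp add: has_sum_def[symmetric])
  from filterlim_compose[OF this filterlim_Int_finite_subsets_at_top[OF t(1) sub(1)]]
  have L: "((\<lambda>P. sum left_jump_prod (P \<inter> {0<..t})) \<longlongrightarrow> ?L) (refinement_filter t)" .
  have "(sum right_jump_prod \<longlongrightarrow> ?R) (finite_subsets_at_top {0..<t})"
    using right_jump_prod_summable[OF t] by (simp add: has_sum_def[symmetric])
  from filterlim_compose[OF this filterlim_Int_finite_subsets_at_top[OF t(1) sub(2)]]
  have R: "((\<lambda>P. sum right_jump_prod (P \<inter> {0..<t})) \<longlongrightarrow> ?R) (refinement_filter t)" .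
  have "eventually (\<lambda>P. sum left_jump_prod (P \<inter> {0<..t}) + sum right_jump_prod (P \<inter> {0..<t}) = ?J P)
      (refinement_filter t)"
    by (rule eventually_mono[OF eventually_partition_of[OF t(1)]]) (simp add: partition_sum_jumps)
  then have J: "(?J \<longlongrightarrow> ?L + ?R) (refinement_filter t)"
    using tendsto_add[OF L R] by (rule tendsto_cong[THEN iffD1])
  moreover have "((\<lambda>P. partition_sum covariation P - ?J P) \<longlongrightarrow> 0) (refinement_filter t)"
  proof (rule tendstoI)
    fix \<epsilon> :: real assume "0 < \<epsilon>"
    then obtain e where e: "0 < e" "4 * \<omega> 0 T powr \<theta> * e powr \<kappa> < \<epsilon>"
      using powr_small_coefficient[of "4 * \<omega> 0 T powr \<theta>" \<kappa> \<epsilon>] exponent_bounds(1) by auto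
    show "eventually (\<lambda>P. dist (partition_sum covariation P - ?J P) 0 < \<epsilon>) (refinement_filter t)"
      using eventually_conj[OF eventually_partition_of[OF t(1)] eventually_fine_partition[OF t e(1)]]
    proof (rule eventually_mono)
      fix P assume "partition_of 0 t P \<and> fine_partition e P"
      then have "norm (partition_sum covariation P - ?J P) \<le> 4 * \<omega> 0 T powr \<theta> * e powr \<kappa>"
        using covariation_minus_jumps_le t(2) e(1) by auto
      then show "dist (partition_sum covariation P - ?J P) 0 < \<epsilon>"
        unfolding dist_norm diff_zero using e(2) by linarith
    qed
  qed
  from tendsto_add[OF this J] show ?thesis by simp
qed

lemma has_bwd_young_fwd_plus_jumps:
  assumes t: "0 \<le> t" "t \<le> T" and fwd: "has_fwd_young x y t I"
  shows "has_bwd_young x y t (I + (infsum left_jump_prod {0<..t} + infsum right_jump_prod {0..<t}))"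
  using tendsto_add[OF fwd[unfolded has_fwd_young_iff_tendsto[OF t(1)]] covariation_tendsto[OF t]]
  unfolding has_bwd_young_iff_tendsto[OF t(1)] bwd_eq_fwd_plus_covariation .

end

section \<open>The control given by p- and q-variation\<close>

definition pvar_control ::
    "real \<Rightarrow> real \<Rightarrow> (real \<Rightarrow> 'a::real_normed_vector) \<Rightarrow> (real \<Rightarrow> 'b::real_normed_vector) \<Rightarrow> real \<Rightarrow> real \<Rightarrow> real"
  where "pvar_control p q x y a b = (SUP P\<in>{P. partition_of a b P}. pvar_sum p x P + pvar_sum q y P)"

lemma pvar_sum_nonneg: "finite P \<Longrightarrow> 0 \<le> pvar_sum p f P"
  by (auto simp: pvar_sum_eq_partition_sum intro!: partition_sum_nonneg)

lemma pvar_sum_pair: "a < b \<Longrightarrow> pvar_sum p f {a, b} = norm (f b - f a) powr p"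
  by (simp add: pvar_sum_eq_partition_sum partition_sum_pair)

lemma pvar_sum_le_extension:
  assumes P: "partition_of a b P" and ab: "0 \<le> a" "b \<le> T"
  shows "partition_of 0 T (P \<union> {0, T})" "pvar_sum p f P \<le> pvar_sum p f (P \<union> {0, T})"
proof -
  let ?P' = "P \<union> {0, T}"
  note m = partition_ofD[OF P]
  show P': "partition_of 0 T ?P'" using P ab unfolding partition_of_def by auto
  have "?P' \<inter> {a..b} = P" using P ab unfolding partition_of_def by auto
  moreover have "a \<in> ?P'" "b \<in> ?P'" "finite ?P'" using P unfolding partition_of_def by auto
  ultimately show "pvar_sum p f P \<le> pvar_sum p f ?P'"
    using partition_sum_restrict_le[where P = ?P' and a = a and b = b and g = "\<lambda>a b. norm (f b - f a) powr p"] m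
    by (simp add: pvar_sum_eq_partition_sum)
qed

lemma pvar_control_upper:
  assumes x: "finite_pvar p 0 T x" and y: "finite_pvar q 0 T y"
    and P: "partition_of a b P" "0 \<le> a" "b \<le> T"
  shows "pvar_sum p x P + pvar_sum q y P \<le> pvar_control p q x y a b"
  unfolding pvar_control_def
proof (rule cSUP_upper)
  obtain Mx My where "\<And>P. partition_of 0 T P \<Longrightarrow> pvar_sum p x P \<le> Mx"
    "\<And>P. partition_of 0 T P \<Longrightarrow> pvar_sum q y P \<le> My"
    using x y unfolding finite_pvar_def by blast
  then have "pvar_sum p x Q + pvar_sum q y Q \<le> Mx + My" if "partition_of a b Q" for Q
    using pvar_sum_le_extension[OF that P(2,3)] pvar_sum_le_extension(2)[OF that P(2,3), of p x]
      pvar_sum_le_extension(2)[OF that P(2,3), of q y]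
    by (meson add_mono order_trans)
  then show "bdd_above ((\<lambda>P. pvar_sum p x P + pvar_sum q y P) ` {P. partition_of a b P})"
    by (intro bdd_aboveI[of _ "Mx + My"]) auto
qed (use P in auto)

lemma pvar_control_least:
  assumes "a \<le> b" "\<And>P. partition_of a b P \<Longrightarrow> pvar_sum p x P + pvar_sum q y P \<le> M"
  shows "pvar_control p q x y a b \<le> M"
  unfolding pvar_control_def using assms partition_of_pair[OF assms(1)] by (intro cSUP_least) auto

lemma pvar_control_is_control:
  assumes T: "0 \<le> T" and x: "finite_pvar p 0 T x" and y: "finite_pvar q 0 T y"
  shows "control (pvar_control p q x y) T"
proof
  show "0 \<le> T" by fact
  fix a b assume ab: "0 \<le> a" "a \<le> b" "b \<le> T"
  have "0 \<le> pvar_sum p x {a, b} + pvar_sum q y {a, b}" by (simp add: pvar_sum_nonneg)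
  also have "\<dots> \<le> pvar_control p q x y a b" using ab by (intro pvar_control_upper[OF x y] partition_of_pair) auto
  finally show "0 \<le> pvar_control p q x y a b" .
next
  fix a c b assume acb: "0 \<le> a" "a \<le> c" "c \<le> b" "b \<le> T"
  let ?\<omega> = "pvar_control p q x y" and ?v = "\<lambda>P. pvar_sum p x P + pvar_sum q y P"
  have glue: "?v P1 + ?v P2 \<le> ?\<omega> a b" if P1: "partition_of a c P1" and P2: "partition_of c b P2" for P1 P2
  proof -
    have fin: "finite P1" "finite P2" "P1 \<subseteq> {a..c}" "P2 \<subseteq> {c..b}" "c \<in> P1" "c \<in> P2"
      using P1 P2 unfolding partition_of_def by auto
    then have "?v (P1 \<union> P2) = ?v P1 + ?v P2"
      using partition_sum_Un[OF fin, of "\<lambda>a b. norm (x b - x a) powr p"]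
        partition_sum_Un[OF fin, of "\<lambda>a b. norm (y b - y a) powr q"]
      by (simp add: pvar_sum_eq_partition_sum)
    then show ?thesis using pvar_control_upper[OF x y partition_of_Un[OF P1 P2]] acb by simp
  qed
  have "?\<omega> a c \<le> ?\<omega> a b - ?\<omega> c b"
  proof (rule pvar_control_least[OF acb(2)])
    fix P1 assume P1: "partition_of a c P1"
    have "?\<omega> c b \<le> ?\<omega> a b - ?v P1"
      using glue[OF P1] by (intro pvar_control_least[OF acb(3)]) fastforce
    then show "?v P1 \<le> ?\<omega> a b - ?\<omega> c b" by simp
  qed
  then show "?\<omega> a c + ?\<omega> c b \<le> ?\<omega> a b" by simp
qed

lemma norm_le_powr_inverse:
  fixes n r w :: real
  assumes "0 \<le> n" "n powr r \<le> w" "0 < r"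
  shows "n \<le> w powr (1 / r)"
proof -
  have "n = (n powr r) powr (1 / r)" using assms by (simp add: powr_powr)
  also have "\<dots> \<le> w powr (1 / r)" using assms by (intro powr_mono2) auto
  finally show ?thesis .
qed

lemma (in control) controlledI_powr:
  assumes r: "0 < r" and le: "\<And>u v. 0 \<le> u \<Longrightarrow> u < v \<Longrightarrow> v \<le> T \<Longrightarrow> norm (f v - f u) powr r \<le> \<omega> u v"
  shows "controlled f (1 / r)"
  unfolding controlled_def
proof (intro allI impI)
  fix u v assume uv: "0 \<le> u" "u \<le> v" "v \<le> T"
  show "norm (f v - f u) \<le> \<omega> u v powr (1 / r)"
  proof (cases "u = v")
    case False
    then show ?thesis using uv r le[of u v] by (intro norm_le_powr_inverse) auto
  qed simp
qed

lemma pvar_control_controlled: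
  assumes T: "0 \<le> T" and x: "finite_pvar p 0 T x" and y: "finite_pvar q 0 T y" and pq: "0 < p" "0 < q"
  shows "control.controlled (pvar_control p q x y) T x (1 / p)" "control.controlled (pvar_control p q x y) T y (1 / q)"
proof -
  interpret control "pvar_control p q x y" T using pvar_control_is_control[OF T x y] .
  have incr: "norm (x v - x u) powr p + norm (y v - y u) powr q \<le> pvar_control p q x y u v"
    if "0 \<le> u" "u < v" "v \<le> T" for u v
  proof -
    have "pvar_sum p x {u, v} + pvar_sum q y {u, v} \<le> pvar_control p q x y u v"
      using that by (intro pvar_control_upper[OF x y] partition_of_pair) auto
    then show ?thesis using that by (simp add: pvar_sum_pair)
  qed
  show "controlled x (1 / p)" "controlled y (1 / q)"
    using incr by (intro controlledI_powr pq; smt (verit) powr_ge_zero)+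
qed

lemma cadlag_on_jump_right:
  assumes "cadlag_on T f" "s \<in> {0..<T}"
  shows "jump_right f s = 0"
proof -
  have "(f \<longlongrightarrow> f s) (at_right s)" using assms unfolding cadlag_on_def by (simp add: continuous_within)
  then have "right_lim f s = f s" unfolding right_lim_def by (intro tendsto_Lim) auto
  then show ?thesis unfolding jump_right_def by simp
qed

lemma caglad_on_jump_left:
  assumes "caglad_on T f" "s \<in> {0<..T}"
  shows "jump_left f s = 0"
proof -
  have "(f \<longlongrightarrow> f s) (at_left s)" using assms unfolding caglad_on_def by (simp add: continuous_within)
  then have "left_lim f s = f s" unfolding left_lim_def by (intro tendsto_Lim) auto
  then show ?thesis unfolding jump_left_def by simp
qed

theorem mainTheorem15:
  fixes x :: "real \<Rightarrow> ('v::euclidean_space \<Rightarrow>\<^sub>L 'w::euclidean_space)"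
    and y :: "real \<Rightarrow> 'v"
    and p q T :: real
  assumes "0 \<le> T" and "0 < p" and "0 < q"
    and "1 / p + 1 / q > 1"
    and "finite_pvar p 0 T x" and "finite_pvar q 0 T y"
  shows "(cadlag_on T x \<longrightarrow>
           (\<forall>t\<in>{0..T}. \<exists>Ib If S.
              has_bwd_young x y t Ib \<and> has_fwd_young x y t If \<and>
              ((\<lambda>r. blinfun_apply (jump_left x r) (jump_left y r)) has_sum S) {0<..t} \<and>
              Ib - If = S))
       \<and> (caglad_on T y \<longrightarrow>
           (\<forall>t\<in>{0..T}. \<exists>Ib If S.
              has_bwd_young x y t Ib \<and> has_fwd_young x y t If \<and>
              ((\<lambda>r. blinfun_apply (jump_right x r) (jump_right y r)) has_sum S) {0..<t} \<and>
              Ib - If = S))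
       \<and> (cadlag_on T x \<and> caglad_on T y \<longrightarrow>
           (\<forall>t\<in>{0..T}. \<exists>I. has_bwd_young x y t I \<and> has_fwd_young x y t I))"
proof -
  interpret control "pvar_control p q x y" T using pvar_control_is_control assms by blast
  interpret young_pair "pvar_control p q x y" T "1 / p" "1 / q" x y
    using assms pvar_control_controlled[OF assms(1,5,6,2,3)] by unfold_locales auto
  let ?L = "\<lambda>t. infsum left_jump_prod {0<..t}" and ?R = "\<lambda>t. infsum right_jump_prod {0..<t}"
  have main: "\<exists>I. has_fwd_young x y t I \<and> has_bwd_young x y t (I + (?L t + ?R t))
      \<and> (left_jump_prod has_sum ?L t) {0<..t} \<and> (right_jump_prod has_sum ?R t) {0..<t}" if "t \<in> {0..T}" for t
    using that fwd_young_exists has_bwd_young_fwd_plus_jumps left_jump_prod_summable right_jump_prod_summable by fastforce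
  have no_right: "?R t = 0" if "cadlag_on T x" "t \<le> T" for t
    using that cadlag_on_jump_right[OF that(1)] by (intro infsum_0) (simp add: right_jump_prod_def)
  have no_left: "?L t = 0" if "caglad_on T y" "t \<le> T" for t
    using that caglad_on_jump_left[OF that(1)] by (intro infsum_0) (simp add: left_jump_prod_def)
  show ?thesis
    using main no_left no_right unfolding left_jump_prod_def right_jump_prod_def
    by (intro conjI impI ballI) (force, force, (metis add.right_neutral atLeastAtMost_iff))
qed

end
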